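(* Let $(R,\mathfrak{m})$ be a Noetherian local ring and $I$ an $R$-ideal of analytic spread $\ell$. Let $s\ge 0$ be an integer, let $f_1,\ldots,f_{\ell+s}$ be elements of $I$, and set $\mathfrak{a}=(f_1,\ldots,f_{\ell-1})$ and $K=(f_1,\ldots,f_{\ell+s})$. Let $\varphi:\mathcal{F}(K)\to\mathcal{F}(I)$ be the natural map of special fiber rings. Then \[I^n=(f_1,\ldots,f_{\ell-1})I^{n-1}+(f_\ell,\ldots,f_{\ell+s})^n\quad\text{for all } n\gg0\] if and only if $\operatorname{coker}(\varphi)$ is a finite $\mathcal{F}(\mathfrak{a})$-module.
   Context: For an ideal $L$ of the local ring $(R,\mathfrak{m})$, $\mathcal{F}(L)=\bigoplus_{m\ge0}L^m/\mathfrak{m}L^m$ is the special fiber ring and $\ell(L)=\dim\mathcal{F}(L)$ is the analytic spread. The natural maps $\mathcal{F}(K)\to\mathcal{F}(I)$ and $\mathcal{F}(\mathfrak{a})\to\mathcal{F}(I)$ are induced by the inclusions $K\subset I$, $\mathfrak{a}\subset I$; $\operatorname{coker}(\varphi)$ is an $\mathcal{F}(\mathfrak{a})$-module via the latter. *)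

theory Defs
  imports "HOL-Algebra.Ideal_Product" "HOL-Algebra.Ring_Divisibility" "HOL-Library.Extended_Nat"
begin

definition ideal_pow :: "('a, 'b) ring_scheme \<Rightarrow> 'a set \<Rightarrow> nat \<Rightarrow> 'a set" where
  "ideal_pow R I n = I [^]\<^bsub>ideals_set R\<^esub> n"

definition local_ring :: "('a, 'b) ring_scheme \<Rightarrow> 'a set \<Rightarrow> bool" where
  "local_ring R m \<longleftrightarrow> cring R \<and> maximalideal m R \<and> (\<forall>M. maximalideal M R \<longrightarrow> M = m)"

definition fib_den :: "('a, 'b) ring_scheme \<Rightarrow> 'a set \<Rightarrow> 'a set \<Rightarrow> nat \<Rightarrow> 'a set" where
  "fib_den R m L n = m \<cdot>\<^bsub>R\<^esub> ideal_pow R L n"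

definition rep :: "'a set \<Rightarrow> 'a" where
  "rep S = (SOME a. a \<in> S)"

text \<open>The special fiber ring F(L) = direct sum over n of L^n / m L^n.
  An element is a function assigning to each degree n a coset (m L^n) + a with a in L^n,
  with only finitely many nonzero components.\<close>
definition special_fiber :: "('a, 'b) ring_scheme \<Rightarrow> 'a set \<Rightarrow> 'a set \<Rightarrow> (nat \<Rightarrow> 'a set) ring" where
  "special_fiber R m L =
    ring.make
      \<comment> \<open>carrier\<close>
      {x. (\<forall>n. \<exists>a \<in> ideal_pow R L n. x n = fib_den R m L n +>\<^bsub>R\<^esub> a)
          \<and> finite {n. x n \<noteq> fib_den R m L n}}
      \<comment> \<open>multiplication\<close>
      (\<lambda>x y n. fib_den R m L n +>\<^bsub>R\<^esub>
                 (\<Oplus>\<^bsub>R\<^esub>i\<in>{..n}. rep (x i) \<otimes>\<^bsub>R\<^esub> rep (y (n - i))))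
      \<comment> \<open>one\<close>
      (\<lambda>n. if n = 0 then fib_den R m L 0 +>\<^bsub>R\<^esub> \<one>\<^bsub>R\<^esub> else fib_den R m L n)
      \<comment> \<open>zero\<close>
      (\<lambda>n. fib_den R m L n)
      \<comment> \<open>addition\<close>
      (\<lambda>x y n. x n <+>\<^bsub>R\<^esub> y n)"

definition krull_dim :: "('c, 'd) ring_scheme \<Rightarrow> enat" where
  "krull_dim S = Sup {enat n | n. \<exists>P. (\<forall>i\<le>n. primeideal (P i) S) \<and> (\<forall>i<n. P i \<subset> P (Suc i))}"

definition analytic_spread :: "('a, 'b) ring_scheme \<Rightarrow> 'a set \<Rightarrow> 'a set \<Rightarrow> enat" where
  "analytic_spread R m L = krull_dim (special_fiber R m L)"

definition fib_map :: "('a, 'b) ring_scheme \<Rightarrow> 'a set \<Rightarrow> 'a set \<Rightarrow> 'a set \<Rightarrow> (nat \<Rightarrow> 'a set) \<Rightarrow> (nat \<Rightarrow> 'a set)" where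
  "fib_map R m J L x = (\<lambda>n. fib_den R m L n +>\<^bsub>R\<^esub> rep (x n))"

text \<open>coker(F(K) \<rightarrow> F(I)) is a finite F(a)-module (module structure via F(a) \<rightarrow> F(I)):
  there are finitely many elements g of F(I) whose classes generate the cokernel,
  i.e. every z in F(I) is  phi(y) + sum_g psi(c_g) g  with y in F(K) and c_g in F(a).\<close>
definition coker_finite_over :: "('a, 'b) ring_scheme \<Rightarrow> 'a set \<Rightarrow> 'a set \<Rightarrow> 'a set \<Rightarrow> 'a set \<Rightarrow> bool" where
  "coker_finite_over R m A K I \<longleftrightarrow>
    (let FI = special_fiber R m I in
     \<exists>G. finite G \<and> G \<subseteq> carrier FI \<and>
       (\<forall>z \<in> carrier FI. \<exists>y \<in> carrier (special_fiber R m K).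
          \<exists>c \<in> G \<rightarrow> carrier (special_fiber R m A).
            z = fib_map R m K I y \<oplus>\<^bsub>FI\<^esub>
                (\<Oplus>\<^bsub>FI\<^esub>g\<in>G. fib_map R m A I (c g) \<otimes>\<^bsub>FI\<^esub> g)))"

end

theory Submission
  imports Defs
begin

text \<open>
  Put T n = a I^(n-1) + J^n with J = (f_l, ..., f_(l+s)). Since K is contained in a + J,
  we have K^n \<subseteq> T n \<subseteq> I^n. If the cokernel of F(K) \<rightarrow> F(I) is generated over F(a) by
  finitely many classes, these vanish in all large degrees, and comparing components of degree n
  gives I^n \<subseteq> K^n + a I^(n-1) + m I^n \<subseteq> T n + m I^n for n \<gg> 0; Nakayama's lemma turns this into
  I^n = T n. Conversely, if I^n = T n for all n > N, induction on n shows that I^n is contained in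
  K^n + m I^n plus the a^(n-d)-multiples of the generators of the ideals I^d with d \<le> N, so the
  classes of these finitely many generators, placed in degree d, generate the cokernel.
\<close>

lemma special_fiber_carrier:
  "carrier (special_fiber R m L) = {x. (\<forall>n. \<exists>a \<in> ideal_pow R L n. x n = fib_den R m L n +>\<^bsub>R\<^esub> a)
     \<and> finite {n. x n \<noteq> fib_den R m L n}}"
  and special_fiber_add: "x \<oplus>\<^bsub>special_fiber R m L\<^esub> y = (\<lambda>n. x n <+>\<^bsub>R\<^esub> y n)"
  and special_fiber_zero: "\<zero>\<^bsub>special_fiber R m L\<^esub> = fib_den R m L"
  and special_fiber_mult: "x \<otimes>\<^bsub>special_fiber R m L\<^esub> y =
     (\<lambda>n. fib_den R m L n +>\<^bsub>R\<^esub> (\<Oplus>\<^bsub>R\<^esub>i\<in>{..n}. rep (x i) \<otimes>\<^bsub>R\<^esub> rep (y (n - i))))"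
  unfolding special_fiber_def ring.defs by (simp_all only: ring.simps partial_object.simps monoid.simps)

context cring
begin

subsection \<open>Ideal arithmetic\<close>

lemma ideal_prod_subset:
  assumes "ideal C R" "\<And>a b. a \<in> A \<Longrightarrow> b \<in> B \<Longrightarrow> a \<otimes> b \<in> C"
  shows "A \<cdot> B \<subseteq> C"
proof
  fix x assume "x \<in> A \<cdot> B"
  then show "x \<in> C"
    by (induction x rule: ideal_prod.induct)
      (auto simp: assms additive_subgroup.a_closed ideal.axioms(1))
qed

lemma ideal_prod_mono:
  "\<lbrakk>ideal A' R; ideal B' R; A \<subseteq> A'; B \<subseteq> B'\<rbrakk> \<Longrightarrow> A \<cdot> B \<subseteq> A' \<cdot> B'"
  by (rule ideal_prod_subset) (auto intro: ideal_prod_is_ideal ideal_prod.prod)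

lemma set_add_subset_ideal:
  assumes "ideal C R" "A \<subseteq> C" "B \<subseteq> C"
  shows "A <+>\<^bsub>R\<^esub> B \<subseteq> C"
  using assms by (auto simp: set_add_def' intro!: additive_subgroup.a_closed[OF ideal.axioms(1)])

lemma set_add_memI: "\<lbrakk>a \<in> A; b \<in> B\<rbrakk> \<Longrightarrow> a \<oplus> b \<in> A <+>\<^bsub>R\<^esub> B"
  unfolding set_add_def' by blast

lemma set_add_assoc:
  assumes "A \<subseteq> carrier R" "B \<subseteq> carrier R" "C \<subseteq> carrier R"
  shows "A <+>\<^bsub>R\<^esub> (B <+>\<^bsub>R\<^esub> C) = (A <+>\<^bsub>R\<^esub> B) <+>\<^bsub>R\<^esub> C"
  using add.set_mult_assoc[OF assms] by (simp add: set_add_def)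

lemma set_add_mono: "\<lbrakk>A \<subseteq> A'; B \<subseteq> B'\<rbrakk> \<Longrightarrow> A <+>\<^bsub>R\<^esub> B \<subseteq> A' <+>\<^bsub>R\<^esub> B'"
  unfolding set_add_def' by blast

lemma ideal_subset_set_add:
  assumes "ideal A R" "ideal B R"
  shows "A \<subseteq> A <+>\<^bsub>R\<^esub> B" "B \<subseteq> A <+>\<^bsub>R\<^esub> B"
proof -
  have "A \<union> B \<subseteq> A <+>\<^bsub>R\<^esub> B"
    using genideal_self[of "A \<union> B"] union_genideal[OF assms] ideal.Icarr[OF assms(1)]
      ideal.Icarr[OF assms(2)] by blast
  then show "A \<subseteq> A <+>\<^bsub>R\<^esub> B" "B \<subseteq> A <+>\<^bsub>R\<^esub> B"
    by auto
qed

lemma ideal_finsum: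
  assumes "ideal C R" "finite A" "\<And>i. i \<in> A \<Longrightarrow> f i \<in> C"
  shows "finsum R f A \<in> C"
  using assms(2,3)
proof (induction A rule: finite_induct)
  case empty
  then show ?case
    by (simp add: additive_subgroup.zero_closed[OF ideal.axioms(1)[OF assms(1)]])
next
  case (insert x A)
  then show ?case
    using ideal.Icarr[OF assms(1)]
    by (simp add: finsum_insert Pi_iff additive_subgroup.a_closed[OF ideal.axioms(1)[OF assms(1)]])
qed

lemma ideal_pow_ideal: "ideal I R \<Longrightarrow> ideal (ideal_pow R I n) R"
  using monoid.nat_pow_closed[OF comm_monoid.axioms(1)[OF ideals_set_is_comm_monoid], of I n]
  by (simp add: ideal_pow_def ideals_set_def)

lemma ideal_pow_0 [simp]: "ideal_pow R I 0 = carrier R"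
  by (simp add: ideal_pow_def ideals_set_def)

lemma ideal_pow_Suc: "ideal_pow R I (Suc n) = ideal_pow R I n \<cdot> I"
  by (simp add: ideal_pow_def ideals_set_def)

lemma ideal_pow_add: "ideal I R \<Longrightarrow> ideal_pow R I (i + j) = ideal_pow R I i \<cdot> ideal_pow R I j"
  using monoid.nat_pow_mult[OF comm_monoid.axioms(1)[OF ideals_set_is_comm_monoid], of I i j]
  by (simp add: ideal_pow_def ideals_set_def)

lemma ideal_pow_1: "ideal I R \<Longrightarrow> ideal_pow R I 1 = I"
  by (simp add: ideal_pow_Suc ideal_prod_commute oneideal ideal_prod_one)

lemma ideal_pow_mono: "\<lbrakk>ideal A R; ideal B R; A \<subseteq> B\<rbrakk> \<Longrightarrow> ideal_pow R A n \<subseteq> ideal_pow R B n"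
  by (induction n) (simp_all add: ideal_pow_Suc ideal_prod_mono ideal_pow_ideal)

lemma ideal_pow_mult_mem:
  "\<lbrakk>ideal L R; a \<in> ideal_pow R L i; b \<in> ideal_pow R L j\<rbrakk> \<Longrightarrow> a \<otimes> b \<in> ideal_pow R L (i + j)"
  by (simp add: ideal_pow_add ideal_prod.prod)

lemma ideal_prod_pow_mult_mem:
  assumes "ideal M R" "ideal L R" "a \<in> M \<cdot> ideal_pow R L i" "b \<in> ideal_pow R L j"
  shows "a \<otimes> b \<in> M \<cdot> ideal_pow R L (i + j)"
proof -
  have "a \<otimes> b \<in> (M \<cdot> ideal_pow R L i) \<cdot> ideal_pow R L j"
    using assms by (simp add: ideal_prod.prod)
  then show ?thesis
    using assms by (simp add: ideal_prod_assoc ideal_pow_ideal ideal_pow_add)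
qed

lemma ideal_pow_Suc_subset:
  "\<lbrakk>ideal A R; ideal I R; A \<subseteq> I\<rbrakk> \<Longrightarrow> ideal_pow R A (Suc n) \<subseteq> A \<cdot> ideal_pow R I n"
  by (simp add: ideal_pow_Suc ideal_prod_commute[of _ A] ideal_pow_ideal ideal_prod_mono ideal_pow_mono)

lemma rcos_eq_iff:
  assumes "ideal H R" "a \<in> carrier R" "b \<in> carrier R"
  shows "H +> a = H +> b \<longleftrightarrow> a \<ominus> b \<in> H"
proof -
  interpret H: ideal H R by fact
  have "H +> a = H +> b \<longleftrightarrow> a \<in> H +> b"
    using H.a_rcos_self[OF assms(2)] H.a_repr_independence'[of a b] assms(3) by auto
  also have "\<dots> \<longleftrightarrow> a \<ominus> b \<in> H"
    by (rule H.a_rcos_module_minus[OF ring_axioms assms(3,2)])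
  finally show ?thesis .
qed

lemma rcos_eq_self_iff:
  assumes "ideal H R" "a \<in> carrier R"
  shows "H +> a = H \<longleftrightarrow> a \<in> H"
proof -
  interpret H: ideal H R by fact
  show ?thesis
    using H.a_rcos_const H.rcos_const_imp_mem assms(2) by blast
qed

lemma rcos_eq_mem:
  assumes "ideal H R" "ideal T R" "H \<subseteq> T" "a \<in> carrier R" "b \<in> carrier R"
    and "H +> a = H +> b" "b \<in> T"
  shows "a \<in> T"
proof -
  have "a \<ominus> b \<in> T"
    using assms rcos_eq_iff by blast
  then have "(a \<ominus> b) \<oplus> b \<in> T"
    using assms(7) additive_subgroup.a_closed[OF ideal.axioms(1)[OF assms(2)]] by blast
  moreover have "(a \<ominus> b) \<oplus> b = a"
    using assms(4,5) by algebra
  ultimately show ?thesis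
    by simp
qed

lemma rep_rcos:
  assumes "ideal H R" "a \<in> carrier R"
  shows "rep (H +> a) \<in> H +> a" "H +> rep (H +> a) = H +> a"
proof -
  interpret H: ideal H R by fact
  show "rep (H +> a) \<in> H +> a"
    unfolding rep_def using H.a_rcos_self[OF assms(2)] by (rule someI)
  then show "H +> rep (H +> a) = H +> a"
    using H.a_repr_independence' assms(2) by simp
qed

lemma rcos_finsum_cong:
  assumes "ideal H R" "f \<in> X \<rightarrow> carrier R" "g \<in> X \<rightarrow> carrier R"
    and "\<And>x. x \<in> X \<Longrightarrow> H +> f x = H +> g x"
  shows "H +> finsum R f X = H +> finsum R g X"
proof -
  interpret \<pi>: ring_hom_cring R "R Quot H" "(+>) H"
    by (rule ideal.rcos_ring_hom_cring[OF assms(1) is_cring])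
  have "finsum (R Quot H) ((+>) H \<circ> f) X = finsum (R Quot H) ((+>) H \<circ> g) X"
  proof (intro \<pi>.S.finsum_cong')
    show "(+>) H \<circ> g \<in> X \<rightarrow> carrier (R Quot H)"
      using assms(3) by (auto intro!: \<pi>.hom_closed)
  qed (use assms(4) in simp_all)
  then show ?thesis
    by (simp only: \<pi>.hom_finsum[OF assms(2)] \<pi>.hom_finsum[OF assms(3)])
qed

lemma genideal_Un:
  assumes "A \<subseteq> carrier R" "B \<subseteq> carrier R"
  shows "Idl (A \<union> B) = Idl A <+>\<^bsub>R\<^esub> Idl B"
proof
  have "A \<union> B \<subseteq> Idl A <+>\<^bsub>R\<^esub> Idl B"
    using genideal_self[OF assms(1)] genideal_self[OF assms(2)]
      ideal_subset_set_add[OF genideal_ideal[OF assms(1)] genideal_ideal[OF assms(2)]] by blast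
  then show "Idl (A \<union> B) \<subseteq> Idl A <+>\<^bsub>R\<^esub> Idl B"
    by (intro genideal_minimal add_ideals genideal_ideal assms)
  show "Idl A <+>\<^bsub>R\<^esub> Idl B \<subseteq> Idl (A \<union> B)"
    using assms by (intro set_add_subset_ideal genideal_ideal subset_Idl_subset) auto
qed

lemma genideal_ideal_prod:
  assumes S: "S \<subseteq> carrier R" and M: "ideal M R"
  shows "Idl (S \<cdot> M) = (Idl S) \<cdot> M"
proof
  have SM: "S \<cdot> M \<subseteq> carrier R"
    using S ideal.Icarr[OF M] by (intro ideal_prod_subset[OF oneideal]) auto
  have "S \<cdot> M \<subseteq> (Idl S) \<cdot> M"
    using genideal_self[OF S] by (intro ideal_prod_subset ideal_prod_is_ideal genideal_ideal S M)
      (auto intro: ideal_prod.prod)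
  then show "Idl (S \<cdot> M) \<subseteq> (Idl S) \<cdot> M"
    by (intro genideal_minimal ideal_prod_is_ideal genideal_ideal S M)
  define X where "X = {a \<in> carrier R. \<forall>b\<in>M. a \<otimes> b \<in> Idl (S \<cdot> M)}"
  interpret SM: ideal "Idl (S \<cdot> M)" R
    using genideal_ideal[OF SM] .
  have "ideal X R"
  proof (rule idealI[OF ring_axioms])
    show "subgroup X (add_monoid R)"
    proof (rule add.subgroupI)
      show "X \<subseteq> carrier R" "X \<noteq> {}"
        unfolding X_def using ideal.Icarr[OF M] by auto
      show "\<ominus> a \<in> X" if "a \<in> X" for a
        using that ideal.Icarr[OF M] unfolding X_def by (auto simp: l_minus)
      show "a \<oplus> a' \<in> X" if "a \<in> X" "a' \<in> X" for a a'
        using that ideal.Icarr[OF M] unfolding X_def by (auto simp: l_distr)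
    qed
    show "x \<otimes> a \<in> X" if "a \<in> X" "x \<in> carrier R" for a x
      using that ideal.Icarr[OF M] SM.I_l_closed unfolding X_def by (auto simp: m_assoc)
    show "a \<otimes> x \<in> X" if "a \<in> X" "x \<in> carrier R" for a x
      using that ideal.Icarr[OF M] ideal.I_l_closed[OF M] unfolding X_def by (auto simp: m_assoc)
  qed
  moreover have "S \<subseteq> X"
    unfolding X_def using S genideal_self[OF SM] by (auto intro: ideal_prod.prod)
  ultimately have "Idl S \<subseteq> X"
    by (rule genideal_minimal)
  then show "(Idl S) \<cdot> M \<subseteq> Idl (S \<cdot> M)"
    unfolding X_def by (intro ideal_prod_subset[OF SM.is_ideal]) auto
qed

lemma reduction_mult_subset:
  assumes A: "ideal A R" and J: "ideal J R" and I: "ideal I R" and AI: "A \<subseteq> I" and JI: "J \<subseteq> I"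
  shows "(A \<cdot> ideal_pow R I n <+>\<^bsub>R\<^esub> ideal_pow R J (Suc n)) \<cdot> (A <+>\<^bsub>R\<^esub> J) \<subseteq>
    A \<cdot> ideal_pow R I (Suc n) <+>\<^bsub>R\<^esub> ideal_pow R J (Suc (Suc n))"
proof (rule ideal_prod_subset)
  have AIn: "ideal (A \<cdot> ideal_pow R I (Suc n)) R"
    using A I by (intro ideal_prod_is_ideal ideal_pow_ideal)
  show "ideal (A \<cdot> ideal_pow R I (Suc n) <+>\<^bsub>R\<^esub> ideal_pow R J (Suc (Suc n))) R"
    using add_ideals[OF AIn ideal_pow_ideal[OF J]] .
  fix t k assume "t \<in> A \<cdot> ideal_pow R I n <+>\<^bsub>R\<^esub> ideal_pow R J (Suc n)" "k \<in> A <+>\<^bsub>R\<^esub> J"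
  then obtain p q \<alpha> \<beta> where pq: "p \<in> A \<cdot> ideal_pow R I n" "q \<in> ideal_pow R J (Suc n)" "t = p \<oplus> q"
    and \<alpha>\<beta>: "\<alpha> \<in> A" "\<beta> \<in> J" "k = \<alpha> \<oplus> \<beta>"
    unfolding set_add_def' by blast
  have carr: "p \<in> carrier R" "q \<in> carrier R" "\<alpha> \<in> carrier R" "\<beta> \<in> carrier R"
    using ideal.Icarr[OF ideal_prod_is_ideal[OF A ideal_pow_ideal[OF I]] pq(1)]
      ideal.Icarr[OF ideal_pow_ideal[OF J] pq(2)] ideal.Icarr[OF A \<alpha>\<beta>(1)] ideal.Icarr[OF J \<alpha>\<beta>(2)]
    by auto
  have "k \<in> ideal_pow R I 1"
    using \<alpha>\<beta> AI JI ideal_pow_1[OF I] set_add_subset_ideal[OF I AI JI] set_add_memI by auto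
  then have "p \<otimes> k \<in> A \<cdot> ideal_pow R I (n + 1)"
    using ideal_prod_pow_mult_mem[OF A I pq(1)] by blast
  moreover have "q \<otimes> \<alpha> \<in> A \<cdot> ideal_pow R I (Suc n)"
  proof -
    have "q \<in> ideal_pow R I (Suc n)"
      using pq(2) ideal_pow_mono[OF J I JI] by blast
    then have "\<alpha> \<otimes> q \<in> A \<cdot> ideal_pow R I (Suc n)"
      by (rule ideal_prod.prod[OF \<alpha>\<beta>(1)])
    then show ?thesis
      using carr by (simp add: m_comm)
  qed
  ultimately have "p \<otimes> k \<oplus> q \<otimes> \<alpha> \<in> A \<cdot> ideal_pow R I (Suc n)"
    using additive_subgroup.a_closed[OF ideal.axioms(1)[OF AIn]] by simp
  moreover have "q \<otimes> \<beta> \<in> ideal_pow R J (Suc (Suc n))"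
    using ideal_prod.prod[OF pq(2) \<alpha>\<beta>(2)] by (simp add: ideal_pow_Suc[of _ "Suc n"])
  moreover have "t \<otimes> k = (p \<otimes> k \<oplus> q \<otimes> \<alpha>) \<oplus> q \<otimes> \<beta>"
    using pq(3) \<alpha>\<beta>(3) carr by algebra
  ultimately show "t \<otimes> k \<in> A \<cdot> ideal_pow R I (Suc n) <+>\<^bsub>R\<^esub> ideal_pow R J (Suc (Suc n))"
    using set_add_memI by simp
qed

lemma ideal_pow_Suc_subset_reduction:
  assumes A: "ideal A R" and J: "ideal J R" and I: "ideal I R"
    and AI: "A \<subseteq> I" and JI: "J \<subseteq> I"
  shows "ideal_pow R (A <+>\<^bsub>R\<^esub> J) (Suc n) \<subseteq> A \<cdot> ideal_pow R I n <+>\<^bsub>R\<^esub> ideal_pow R J (Suc n)"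
proof (induction n)
  case 0
  show ?case
    using ideal_prod_one[OF A] ideal_pow_1[OF add_ideals[OF A J]] ideal_pow_1[OF J] by simp
next
  case (Suc n)
  have "ideal_pow R (A <+>\<^bsub>R\<^esub> J) (Suc (Suc n)) \<subseteq>
      (A \<cdot> ideal_pow R I n <+>\<^bsub>R\<^esub> ideal_pow R J (Suc n)) \<cdot> (A <+>\<^bsub>R\<^esub> J)"
    unfolding ideal_pow_Suc[of _ "Suc n"] using Suc.IH A J I
    by (intro ideal_prod_mono add_ideals ideal_prod_is_ideal ideal_pow_ideal) auto
  also have "\<dots> \<subseteq> A \<cdot> ideal_pow R I (Suc n) <+>\<^bsub>R\<^esub> ideal_pow R J (Suc (Suc n))"
    by (rule reduction_mult_subset[OF A J I AI JI])
  finally show ?case .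
qed

lemma reduction_subset_ideal_pow:
  assumes "ideal A R" "ideal J R" "ideal I R" "A \<subseteq> I" "J \<subseteq> I"
  shows "A \<cdot> ideal_pow R I n <+>\<^bsub>R\<^esub> ideal_pow R J (Suc n) \<subseteq> ideal_pow R I (Suc n)"
proof (rule set_add_subset_ideal[OF ideal_pow_ideal[OF assms(3)]])
  show "A \<cdot> ideal_pow R I n \<subseteq> ideal_pow R I (Suc n)"
    using ideal_prod_mono[OF assms(3) ideal_pow_ideal[OF assms(3)] assms(4) order_refl]
      ideal_prod_commute[OF assms(3) ideal_pow_ideal[OF assms(3)]]
    by (simp add: ideal_pow_Suc)
  show "ideal_pow R J (Suc n) \<subseteq> ideal_pow R I (Suc n)"
    using ideal_pow_mono assms by blast
qed

subsection \<open>Local rings and Nakayama's lemma\<close>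

lemma exists_maximalideal_superset:
  assumes "ideal P R" "\<one> \<notin> P"
  shows "\<exists>M. maximalideal M R \<and> P \<subseteq> M"
proof -
  define S where "S = {J. ideal J R \<and> P \<subseteq> J \<and> \<one> \<notin> J}"
  have "\<exists>M\<in>S. \<forall>J\<in>S. M \<subseteq> J \<longrightarrow> J = M"
  proof (rule subset_Zorn)
    fix C assume C: "subset.chain S C"
    show "\<exists>U\<in>S. \<forall>X\<in>C. X \<subseteq> U"
    proof (cases "C = {}")
      case True
      then show ?thesis using assms S_def by auto
    next
      case False
      have "subset.chain {I. ideal I R} C"
        using C S_def by (auto simp: pred_on.chain_def)
      from chain_Union_is_ideal[OF this] have "ideal (\<Union>C) R"
        using False by simp
      moreover have "P \<subseteq> \<Union>C" "\<one> \<notin> \<Union>C"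
        using False C S_def unfolding pred_on.chain_def by blast+
      ultimately show ?thesis
        using S_def by auto
    qed
  qed
  then obtain M where M: "M \<in> S" "\<forall>J\<in>S. M \<subseteq> J \<longrightarrow> J = M" by blast
  have "maximalideal M R"
  proof (rule maximalidealI)
    show "ideal M R" "carrier R \<noteq> M" using M S_def by auto
    fix J assume J: "ideal J R" "M \<subseteq> J" "J \<subseteq> carrier R"
    show "J = M \<or> J = carrier R"
    proof (cases "\<one> \<in> J")
      case True
      then show ?thesis using ideal.one_imp_carrier[OF J(1)] by blast
    next
      case False
      then have "J \<in> S" using J M S_def by auto
      then show ?thesis using M J by blast
    qed
  qed
  then show ?thesis using M S_def by auto
qed

lemma local_ring_ideal: "local_ring R m \<Longrightarrow> ideal m R"
  by (simp add: local_ring_def maximalideal.axioms(1))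

lemma local_ring_one_minus_invertible:
  assumes "local_ring R m" "\<mu> \<in> m"
  shows "\<exists>v\<in>carrier R. v \<otimes> (\<one> \<ominus> \<mu>) = \<one>"
proof (rule ccontr)
  assume not_unit: "\<not> ?thesis"
  have mx: "maximalideal m R" and loc: "\<forall>M. maximalideal M R \<longrightarrow> M = m"
    using assms(1) by (simp_all add: local_ring_def)
  have m: "ideal m R"
    using maximalideal.axioms(1)[OF mx] .
  have \<mu>: "\<mu> \<in> carrier R"
    using ideal.Icarr[OF m assms(2)] .
  have u: "\<one> \<ominus> \<mu> \<in> carrier R"
    using \<mu> by simp
  have "\<one> \<notin> PIdl (\<one> \<ominus> \<mu>)"
    using not_unit by (auto simp: cgenideal_def)
  then obtain M where "maximalideal M R" "PIdl (\<one> \<ominus> \<mu>) \<subseteq> M"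
    using exists_maximalideal_superset[OF cgenideal_ideal[OF u]] by blast
  then have "\<one> \<ominus> \<mu> \<in> m"
    using loc cgenideal_self[OF u] by auto
  then have "(\<one> \<ominus> \<mu>) \<oplus> \<mu> \<in> m"
    using assms(2) additive_subgroup.a_closed[OF ideal.axioms(1)[OF m]] by blast
  moreover have "(\<one> \<ominus> \<mu>) \<oplus> \<mu> = \<one>"
    using \<mu> by (simp add: a_minus_def a_assoc l_neg)
  ultimately have "m = carrier R"
    using ideal.one_imp_carrier[OF m] by simp
  then show False
    using maximalideal.I_notcarr[OF mx] by simp
qed

lemma local_ring_cancel:
  assumes "local_ring R m" "\<mu> \<in> m" "ideal N R" "x \<in> carrier R" "(\<one> \<ominus> \<mu>) \<otimes> x \<in> N"
  shows "x \<in> N"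
proof -
  obtain v where v: "v \<in> carrier R" "v \<otimes> (\<one> \<ominus> \<mu>) = \<one>"
    using local_ring_one_minus_invertible assms(1,2) by blast
  have "\<mu> \<in> carrier R"
    using ideal.Icarr[OF local_ring_ideal[OF assms(1)] assms(2)] .
  then have "v \<otimes> ((\<one> \<ominus> \<mu>) \<otimes> x) = x"
    using v assms(4) by (simp add: m_assoc[symmetric])
  then show ?thesis
    using ideal.I_l_closed[OF assms(3,5) v(1)] by simp
qed

lemma ideal_prod_cgenideal_mem:
  assumes "ideal M R" "x \<in> carrier R" "y \<in> M \<cdot> (Idl {x})"
  shows "\<exists>\<mu>\<in>M. y = \<mu> \<otimes> x"
  using assms(3)
proof (induction y rule: ideal_prod.induct)
  case (prod i j)
  then obtain r where r: "r \<in> carrier R" "j = r \<otimes> x"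
    using cgenideal_eq_genideal[OF assms(2)] by (auto simp: cgenideal_def)
  have "i \<otimes> j = (i \<otimes> r) \<otimes> x"
    using r prod(1) assms(2) ideal.Icarr[OF assms(1)] by (simp add: m_assoc)
  then show ?case
    using ideal.I_r_closed[OF assms(1) prod(1) r(1)] by blast
next
  case (sum s1 s2)
  then obtain \<mu>1 \<mu>2 where "\<mu>1 \<in> M" "\<mu>2 \<in> M" "s1 = \<mu>1 \<otimes> x" "s2 = \<mu>2 \<otimes> x"
    by blast
  moreover have "\<mu>1 \<in> carrier R" "\<mu>2 \<in> carrier R"
    using calculation ideal.Icarr[OF assms(1)] by auto
  ultimately have "s1 \<oplus> s2 = (\<mu>1 \<oplus> \<mu>2) \<otimes> x" "\<mu>1 \<oplus> \<mu>2 \<in> M"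
    using assms(2) additive_subgroup.a_closed[OF ideal.axioms(1)[OF assms(1)]] by (auto simp: l_distr)
  then show ?case
    by blast
qed

lemma local_ring_absorb:
  assumes loc: "local_ring R m" and T: "ideal T R" and x: "x \<in> carrier R"
    and "x \<in> T <+>\<^bsub>R\<^esub> m \<cdot> (Idl {x})"
  shows "x \<in> T"
proof -
  have m: "ideal m R"
    using local_ring_ideal[OF loc] .
  obtain t y where t: "t \<in> T" "y \<in> m \<cdot> (Idl {x})" and x_eq: "x = t \<oplus> y"
    using assms(4) unfolding set_add_def' by blast
  obtain \<mu> where \<mu>: "\<mu> \<in> m" "y = \<mu> \<otimes> x"
    using ideal_prod_cgenideal_mem[OF m x t(2)] by blast
  have carr: "\<mu> \<in> carrier R" "t \<in> carrier R"
    using t \<mu> ideal.Icarr[OF m] ideal.Icarr[OF T] by auto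
  have "(\<one> \<ominus> \<mu>) \<otimes> x = x \<ominus> \<mu> \<otimes> x"
    using carr x by algebra
  also have "\<dots> = (t \<oplus> \<mu> \<otimes> x) \<ominus> \<mu> \<otimes> x"
    using arg_cong[where f="\<lambda>z. z \<ominus> \<mu> \<otimes> x", OF x_eq] \<mu>(2) by simp
  also have "\<dots> = t"
    using carr x by algebra
  finally show "x \<in> T"
    using local_ring_cancel[OF loc \<mu>(1) T x] t(1) by simp
qed

lemma nakayama:
  assumes "local_ring R m" "finite S" "S \<subseteq> carrier R" "ideal T R"
    and "Idl S \<subseteq> T <+>\<^bsub>R\<^esub> m \<cdot> (Idl S)"
  shows "Idl S \<subseteq> T"
  using assms(2-5)
proof (induction S arbitrary: T rule: finite_induct)
  case empty
  then show ?case by (simp add: genideal_minimal)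
next
  case (insert x S)
  have m: "ideal m R"
    using local_ring_ideal[OF assms(1)] .
  have x: "x \<in> carrier R" and S: "S \<subseteq> carrier R"
    using insert.prems by auto
  let ?X = "Idl {x}" and ?U = "Idl S"
  have X: "ideal ?X R" and U: "ideal ?U R"
    using x S by (auto intro: genideal_ideal)
  have mX: "ideal (m \<cdot> ?X) R" and mU: "ideal (m \<cdot> ?U) R"
    using m X U by (auto intro: ideal_prod_is_ideal)
  define T' where "T' = T <+>\<^bsub>R\<^esub> m \<cdot> ?X"
  have T': "ideal T' R"
    unfolding T'_def using add_ideals[OF insert.prems(2) mX] .
  have split: "Idl (insert x S) = ?X <+>\<^bsub>R\<^esub> ?U"
    using genideal_Un[of "{x}" S] x S by simp
  have hyp: "Idl (insert x S) \<subseteq> T <+>\<^bsub>R\<^esub> (m \<cdot> ?X <+>\<^bsub>R\<^esub> m \<cdot> ?U)"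
    using insert.prems(3) unfolding split by (simp add: ideal_prod_distr m X U)
  have small: "?X <+>\<^bsub>R\<^esub> ?U \<subseteq> T' <+>\<^bsub>R\<^esub> m \<cdot> ?U"
    using hyp set_add_assoc[OF additive_subgroup.a_subset[OF ideal.axioms(1)[OF insert.prems(2)]]
        additive_subgroup.a_subset[OF ideal.axioms(1)[OF mX]] additive_subgroup.a_subset[OF ideal.axioms(1)[OF mU]]]
    unfolding split T'_def by simp
  have "?U \<subseteq> T' <+>\<^bsub>R\<^esub> m \<cdot> ?U"
    using small ideal_subset_set_add[OF X U] by blast
  then have UT': "?U \<subseteq> T'"
    using insert.IH[OF S T'] by blast
  have "x \<in> T'"
  proof -
    have "m \<cdot> ?U \<subseteq> T'"
      using ideal_prod_inter[OF m U] UT' by blast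
    then have "T' <+>\<^bsub>R\<^esub> m \<cdot> ?U \<subseteq> T'"
      by (intro set_add_subset_ideal T') auto
    then show ?thesis
      using small ideal_subset_set_add[OF X U] genideal_self'[OF x] by blast
  qed
  then have "x \<in> T"
    using local_ring_absorb[OF assms(1) insert.prems(2) x] unfolding T'_def by blast
  then have XT: "?X \<subseteq> T"
    using genideal_minimal[OF insert.prems(2)] by simp
  then have "m \<cdot> ?X \<subseteq> T"
    using ideal_prod_inter[OF m X] by blast
  then have "?U \<subseteq> T"
    using UT' set_add_subset_ideal[OF insert.prems(2) order_refl] unfolding T'_def by blast
  then show ?case
    unfolding split using set_add_subset_ideal[OF insert.prems(2) XT] by blast
qed

end

definition lin_comb :: "('a, 'b) ring_scheme \<Rightarrow> 'c set \<Rightarrow> ('c \<Rightarrow> 'a) \<Rightarrow> ('c \<Rightarrow> 'a set) \<Rightarrow> 'a set" where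
  "lin_comb R S v H = {\<Oplus>\<^bsub>R\<^esub>s\<in>S. h s \<otimes>\<^bsub>R\<^esub> v s | h. h \<in> Pi S H}"

context cring
begin

lemma lin_comb_smult:
  assumes "finite S" "v \<in> S \<rightarrow> carrier R" "h \<in> S \<rightarrow> carrier R" "r \<in> carrier R"
  shows "r \<otimes> (\<Oplus>s\<in>S. h s \<otimes> v s) = (\<Oplus>s\<in>S. (r \<otimes> h s) \<otimes> v s)"
proof -
  have "r \<otimes> (\<Oplus>s\<in>S. h s \<otimes> v s) = (\<Oplus>s\<in>S. r \<otimes> (h s \<otimes> v s))"
    using assms by (intro finsum_rdistr) auto
  also have "\<dots> = (\<Oplus>s\<in>S. (r \<otimes> h s) \<otimes> v s)"
    using assms by (intro finsum_cong') (auto simp: m_assoc Pi_iff)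
  finally show ?thesis .
qed

lemma lin_comb_add:
  assumes "finite S" "v \<in> S \<rightarrow> carrier R" "h \<in> S \<rightarrow> carrier R" "h' \<in> S \<rightarrow> carrier R"
  shows "(\<Oplus>s\<in>S. h s \<otimes> v s) \<oplus> (\<Oplus>s\<in>S. h' s \<otimes> v s) = (\<Oplus>s\<in>S. (h s \<oplus> h' s) \<otimes> v s)"
proof -
  have "(\<Oplus>s\<in>S. h s \<otimes> v s) \<oplus> (\<Oplus>s\<in>S. h' s \<otimes> v s) = (\<Oplus>s\<in>S. h s \<otimes> v s \<oplus> h' s \<otimes> v s)"
    using assms by (intro finsum_addf[symmetric]) auto
  also have "\<dots> = (\<Oplus>s\<in>S. (h s \<oplus> h' s) \<otimes> v s)"
    using assms by (intro finsum_cong') (auto simp: l_distr Pi_iff)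
  finally show ?thesis .
qed

lemma lin_comb_ideal:
  assumes "finite S" "v \<in> S \<rightarrow> carrier R" "\<And>s. s \<in> S \<Longrightarrow> ideal (H s) R"
  shows "ideal (lin_comb R S v H) R"
proof -
  have coeff: "h \<in> S \<rightarrow> carrier R" if "h \<in> Pi S H" for h
    using that ideal.Icarr[OF assms(3)] by blast
  have closed: "x \<in> carrier R" if "x \<in> lin_comb R S v H" for x
    using that coeff assms(2) unfolding lin_comb_def by (auto intro!: finsum_closed)
  have lmult: "r \<otimes> x \<in> lin_comb R S v H" if x: "x \<in> lin_comb R S v H" and r: "r \<in> carrier R" for x r
  proof -
    obtain h where h: "h \<in> Pi S H" "x = (\<Oplus>s\<in>S. h s \<otimes> v s)"
      using x unfolding lin_comb_def by blast
    have "(\<lambda>s. r \<otimes> h s) \<in> Pi S H"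
      using h(1) r ideal.I_l_closed[OF assms(3)] by blast
    then show ?thesis
      unfolding lin_comb_def h(2) lin_comb_smult[OF assms(1,2) coeff[OF h(1)] r]
      by (blast intro: exI[of _ "\<lambda>s. r \<otimes> h s"])
  qed
  have add: "x \<oplus> y \<in> lin_comb R S v H" if xy: "x \<in> lin_comb R S v H" "y \<in> lin_comb R S v H" for x y
  proof -
    obtain h h' where h: "h \<in> Pi S H" "x = (\<Oplus>s\<in>S. h s \<otimes> v s)"
      and h': "h' \<in> Pi S H" "y = (\<Oplus>s\<in>S. h' s \<otimes> v s)"
      using xy unfolding lin_comb_def by blast
    have "(\<lambda>s. h s \<oplus> h' s) \<in> Pi S H"
      using h(1) h'(1) additive_subgroup.a_closed[OF ideal.axioms(1)[OF assms(3)]] by blast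
    then show ?thesis
      unfolding lin_comb_def h(2) h'(2) lin_comb_add[OF assms(1,2) coeff[OF h(1)] coeff[OF h'(1)]]
      by (blast intro: exI[of _ "\<lambda>s. h s \<oplus> h' s"])
  qed
  have "(\<lambda>s. \<zero>) \<in> Pi S H"
    using additive_subgroup.zero_closed[OF ideal.axioms(1)[OF assms(3)]] by blast
  then have nonempty: "lin_comb R S v H \<noteq> {}"
    unfolding lin_comb_def by (blast intro: exI[of _ "\<lambda>s. \<zero>"])
  show ?thesis
  proof (rule idealI[OF ring_axioms])
    show "subgroup (lin_comb R S v H) (add_monoid R)"
    proof (rule add.subgroupI)
      show "lin_comb R S v H \<subseteq> carrier R" "lin_comb R S v H \<noteq> {}"
        using closed nonempty by auto
      show "\<ominus> x \<in> lin_comb R S v H" if "x \<in> lin_comb R S v H" for x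
        using lmult[OF that, of "\<ominus> \<one>"] closed[OF that] by (simp add: l_minus)
      show "x \<oplus> y \<in> lin_comb R S v H" if "x \<in> lin_comb R S v H" "y \<in> lin_comb R S v H" for x y
        using add[OF that] .
    qed
    show "x \<otimes> a \<in> lin_comb R S v H" if "a \<in> lin_comb R S v H" "x \<in> carrier R" for a x
      using lmult[OF that] .
    show "a \<otimes> x \<in> lin_comb R S v H" if "a \<in> lin_comb R S v H" "x \<in> carrier R" for a x
      using lmult[OF that] closed[OF that(1)] that(2) by (simp add: m_comm)
  qed
qed

lemma lin_comb_single:
  assumes "finite S" "v \<in> S \<rightarrow> carrier R" "g \<in> S" "\<one> \<in> H g" "\<And>s. s \<in> S \<Longrightarrow> \<zero> \<in> H s"
  shows "v g \<in> lin_comb R S v H"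
proof -
  let ?h = "\<lambda>s. if g = s then \<one> else \<zero>"
  have "(\<Oplus>s\<in>S. ?h s \<otimes> v s) = (\<Oplus>s\<in>S. if g = s then v s else \<zero>)"
    using assms(2) by (intro finsum_cong') (auto simp: Pi_iff)
  also have "\<dots> = v g"
    using finsum_singleton[OF assms(3,1,2)] .
  finally have "(\<Oplus>s\<in>S. ?h s \<otimes> v s) = v g" .
  moreover have "?h \<in> Pi S H"
    using assms(4,5) by auto
  ultimately show ?thesis
    unfolding lin_comb_def by (auto intro!: exI[of _ ?h])
qed

end

subsection \<open>Representatives in the special fiber ring\<close>

definition fiber_class :: "('a, 'b) ring_scheme \<Rightarrow> 'a set \<Rightarrow> 'a set \<Rightarrow> (nat \<Rightarrow> 'a) \<Rightarrow> nat \<Rightarrow> 'a set" where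
  "fiber_class R m L a = (\<lambda>n. fib_den R m L n +>\<^bsub>R\<^esub> a n)"

definition fiber_seq :: "('a, 'b) ring_scheme \<Rightarrow> 'a set \<Rightarrow> 'a set \<Rightarrow> (nat \<Rightarrow> 'a) \<Rightarrow> bool" where
  "fiber_seq R m L a \<longleftrightarrow> (\<forall>n. a n \<in> ideal_pow R L n) \<and> finite {n. a n \<notin> fib_den R m L n}"

context cring
begin

lemma fib_den_ideal: "\<lbrakk>ideal m R; ideal L R\<rbrakk> \<Longrightarrow> ideal (fib_den R m L n) R"
  unfolding fib_den_def by (intro ideal_prod_is_ideal ideal_pow_ideal)

lemma fib_den_subset: "\<lbrakk>ideal m R; ideal L R\<rbrakk> \<Longrightarrow> fib_den R m L n \<subseteq> ideal_pow R L n"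
  unfolding fib_den_def using ideal_prod_inter ideal_pow_ideal by blast

lemma fib_den_mono:
  "\<lbrakk>ideal m R; ideal J R; ideal L R; J \<subseteq> L\<rbrakk> \<Longrightarrow> fib_den R m J n \<subseteq> fib_den R m L n"
  unfolding fib_den_def by (intro ideal_prod_mono ideal_pow_ideal ideal_pow_mono) auto

lemma fiber_seq_mono:
  assumes "ideal m R" "ideal J R" "ideal L R" "J \<subseteq> L" "fiber_seq R m J a"
  shows "fiber_seq R m L a"
proof -
  have "{n. a n \<notin> fib_den R m L n} \<subseteq> {n. a n \<notin> fib_den R m J n}"
    using fib_den_mono[OF assms(1-4)] by blast
  then show ?thesis
    using assms(5) ideal_pow_mono[OF assms(2-4)] unfolding fiber_seq_def by (blast intro: finite_subset)
qed

lemma fib_map_fiber_class: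
  assumes "ideal m R" "ideal J R" "ideal L R" "J \<subseteq> L" "\<And>n. a n \<in> carrier R"
  shows "fib_map R m J L (fiber_class R m J a) = fiber_class R m L a"
proof
  fix n
  interpret DL: ideal "fib_den R m L n" R
    by (rule fib_den_ideal[OF assms(1,3)])
  have "rep (fib_den R m J n +> a n) \<in> fib_den R m L n +> a n"
    using rep_rcos(1)[OF fib_den_ideal[OF assms(1,2)] assms(5)[of n]] fib_den_mono[OF assms(1-4), of n]
    unfolding a_r_coset_def' by blast
  then show "fib_map R m J L (fiber_class R m J a) n = fiber_class R m L a n"
    unfolding fib_map_def fiber_class_def using DL.a_repr_independence' assms(5) by simp
qed

lemma fiber_seq_eventually:
  assumes "fiber_seq R m L a"
  obtains N where "\<And>n. N \<le> n \<Longrightarrow> a n \<in> fib_den R m L n"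
proof -
  obtain N where "\<forall>n\<in>{n. a n \<notin> fib_den R m L n}. n < N"
    using assms unfolding fiber_seq_def finite_nat_set_iff_bounded by blast
  then show ?thesis
    using that by (meson leD mem_Collect_eq)
qed

context
  fixes m L :: "'a set"
  assumes m: "ideal m R" and L: "ideal L R"
begin

lemma fiber_seq_carrier: "fiber_seq R m L a \<Longrightarrow> a n \<in> carrier R"
  unfolding fiber_seq_def using ideal.Icarr[OF ideal_pow_ideal[OF L]] by blast

lemma fiber_class_closed:
  assumes "fiber_seq R m L a"
  shows "fiber_class R m L a \<in> carrier (special_fiber R m L)"
proof -
  have "{n. fib_den R m L n +> a n \<noteq> fib_den R m L n} = {n. a n \<notin> fib_den R m L n}"
    using rcos_eq_self_iff[OF fib_den_ideal[OF m L] fiber_seq_carrier[OF assms]] by blast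
  then show ?thesis
    using assms unfolding fiber_seq_def fiber_class_def special_fiber_carrier by auto
qed

lemma special_fiber_elemE:
  assumes "x \<in> carrier (special_fiber R m L)"
  obtains a where "fiber_seq R m L a" "x = fiber_class R m L a"
proof -
  have "\<exists>a. a \<in> ideal_pow R L n \<and> x n = fib_den R m L n +> a" for n
    using assms unfolding special_fiber_carrier by blast
  then have "\<forall>n. \<exists>a. a \<in> ideal_pow R L n \<and> x n = fib_den R m L n +> a"
    by blast
  then obtain a where a: "\<forall>n. a n \<in> ideal_pow R L n \<and> x n = fib_den R m L n +> a n"
    by (rule choice[THEN exE])
  have "{n. a n \<notin> fib_den R m L n} = {n. x n \<noteq> fib_den R m L n}"
    using a rcos_eq_self_iff[OF fib_den_ideal[OF m L]] ideal.Icarr[OF ideal_pow_ideal[OF L]] by metis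
  then have "fiber_seq R m L a"
    using a assms unfolding fiber_seq_def special_fiber_carrier by simp
  moreover have "x = fiber_class R m L a"
    using a unfolding fiber_class_def by auto
  ultimately show ?thesis
    using that by blast
qed

lemma fiber_class_add:
  assumes "\<And>n. a n \<in> carrier R" "\<And>n. b n \<in> carrier R"
  shows "fiber_class R m L a \<oplus>\<^bsub>special_fiber R m L\<^esub> fiber_class R m L b =
    fiber_class R m L (\<lambda>n. a n \<oplus> b n)"
  using assms by (simp add: special_fiber_add fiber_class_def ideal.a_rcos_sum[OF fib_den_ideal[OF m L]])

lemma fiber_seq_add:
  assumes "fiber_seq R m L a" "fiber_seq R m L b"
  shows "fiber_seq R m L (\<lambda>n. a n \<oplus> b n)"
proof -
  have "{n. a n \<oplus> b n \<notin> fib_den R m L n} \<subseteq> {n. a n \<notin> fib_den R m L n} \<union> {n. b n \<notin> fib_den R m L n}"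
    using additive_subgroup.a_closed[OF ideal.axioms(1)[OF fib_den_ideal[OF m L]]] by blast
  then show ?thesis
    using assms additive_subgroup.a_closed[OF ideal.axioms(1)[OF ideal_pow_ideal[OF L]]]
    unfolding fiber_seq_def by (blast intro: finite_subset)
qed

lemma special_fiber_zero_class: "\<zero>\<^bsub>special_fiber R m L\<^esub> = fiber_class R m L (\<lambda>n. \<zero>)"
  using ideal.Icarr[OF fib_den_ideal[OF m L]]
  by (simp add: special_fiber_zero fiber_class_def subset_iff)

lemma fiber_seq_zero: "fiber_seq R m L (\<lambda>n. \<zero>)"
  unfolding fiber_seq_def
  using additive_subgroup.zero_closed[OF ideal.axioms(1)[OF fib_den_ideal[OF m L]]]
    additive_subgroup.zero_closed[OF ideal.axioms(1)[OF ideal_pow_ideal[OF L]]] by simp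

lemma special_fiber_abelian_monoid: "abelian_monoid (special_fiber R m L)"
proof (rule abelian_monoidI)
  let ?F = "special_fiber R m L"
  show "x \<oplus>\<^bsub>?F\<^esub> y \<in> carrier ?F" if "x \<in> carrier ?F" "y \<in> carrier ?F" for x y
    using that by (elim special_fiber_elemE)
      (simp add: fiber_class_add fiber_seq_carrier fiber_class_closed fiber_seq_add)
  show "\<zero>\<^bsub>?F\<^esub> \<in> carrier ?F"
    by (simp add: special_fiber_zero_class fiber_class_closed fiber_seq_zero)
  show "(x \<oplus>\<^bsub>?F\<^esub> y) \<oplus>\<^bsub>?F\<^esub> z = x \<oplus>\<^bsub>?F\<^esub> (y \<oplus>\<^bsub>?F\<^esub> z)"
    if "x \<in> carrier ?F" "y \<in> carrier ?F" "z \<in> carrier ?F" for x y z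
    using that by (elim special_fiber_elemE) (simp add: fiber_class_add fiber_seq_carrier a_assoc)
  show "\<zero>\<^bsub>?F\<^esub> \<oplus>\<^bsub>?F\<^esub> x = x" if "x \<in> carrier ?F" for x
    using that by (elim special_fiber_elemE) (simp add: special_fiber_zero_class fiber_class_add fiber_seq_carrier)
  show "x \<oplus>\<^bsub>?F\<^esub> y = y \<oplus>\<^bsub>?F\<^esub> x" if "x \<in> carrier ?F" "y \<in> carrier ?F" for x y
    using that by (elim special_fiber_elemE) (simp add: fiber_class_add fiber_seq_carrier a_comm)
qed

lemma fiber_class_finsum:
  assumes "finite G" "\<And>g. g \<in> G \<Longrightarrow> fiber_seq R m L (a g)"
  shows "finsum (special_fiber R m L) (\<lambda>g. fiber_class R m L (a g)) G =
    fiber_class R m L (\<lambda>n. \<Oplus>g\<in>G. a g n)"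
  using assms
proof (induction G rule: finite_induct)
  case empty
  show ?case
    using abelian_monoid.finsum_empty[OF special_fiber_abelian_monoid]
    by (simp add: special_fiber_zero_class)
next
  case (insert g G)
  have carr: "\<And>h n. h \<in> insert g G \<Longrightarrow> a h n \<in> carrier R"
    using insert.prems fiber_seq_carrier by blast
  have "finsum (special_fiber R m L) (\<lambda>g. fiber_class R m L (a g)) (insert g G) =
      fiber_class R m L (a g) \<oplus>\<^bsub>special_fiber R m L\<^esub> fiber_class R m L (\<lambda>n. \<Oplus>h\<in>G. a h n)"
    using insert fiber_class_closed
    by (simp add: abelian_monoid.finsum_insert[OF special_fiber_abelian_monoid] Pi_iff)
  also have "\<dots> = fiber_class R m L (\<lambda>n. \<Oplus>h\<in>insert g G. a h n)"
    using insert carr by (simp add: fiber_class_add finsum_closed finsum_insert Pi_iff)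
  finally show ?case .
qed

lemma rep_fib_den_rcos:
  assumes "x \<in> ideal_pow R L n"
  shows "rep (fib_den R m L n +> x) \<in> ideal_pow R L n"
    "fib_den R m L n +> rep (fib_den R m L n +> x) = fib_den R m L n +> x"
proof -
  have x: "x \<in> carrier R"
    using assms ideal.Icarr[OF ideal_pow_ideal[OF L]] by blast
  obtain h where "h \<in> fib_den R m L n" "rep (fib_den R m L n +> x) = h \<oplus> x"
    using rep_rcos(1)[OF fib_den_ideal[OF m L] x] unfolding a_r_coset_def' by blast
  then show "rep (fib_den R m L n +> x) \<in> ideal_pow R L n"
    using assms fib_den_subset[OF m L, of n]
      additive_subgroup.a_closed[OF ideal.axioms(1)[OF ideal_pow_ideal[OF L]]] by (metis subsetD)
  show "fib_den R m L n +> rep (fib_den R m L n +> x) = fib_den R m L n +> x"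
    using rep_rcos(2)[OF fib_den_ideal[OF m L] x] .
qed

lemma fib_den_mult_cong:
  assumes "x \<in> ideal_pow R L i" "x' \<in> ideal_pow R L i" "y \<in> ideal_pow R L j" "y' \<in> ideal_pow R L j"
    and "fib_den R m L i +> x = fib_den R m L i +> x'" "fib_den R m L j +> y = fib_den R m L j +> y'"
  shows "fib_den R m L (i + j) +> x \<otimes> y = fib_den R m L (i + j) +> x' \<otimes> y'"
proof -
  have carr: "x \<in> carrier R" "x' \<in> carrier R" "y \<in> carrier R" "y' \<in> carrier R"
    using assms(1-4) ideal.Icarr[OF ideal_pow_ideal[OF L]] by blast+
  have dx: "x \<ominus> x' \<in> m \<cdot> ideal_pow R L i" and dy: "y \<ominus> y' \<in> m \<cdot> ideal_pow R L j"
    using assms(5,6) rcos_eq_iff[OF fib_den_ideal[OF m L]] carr unfolding fib_den_def by auto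
  have "(x \<ominus> x') \<otimes> y \<in> m \<cdot> ideal_pow R L (i + j)"
    using ideal_prod_pow_mult_mem[OF m L dx assms(3)] .
  moreover have "(y \<ominus> y') \<otimes> x' \<in> m \<cdot> ideal_pow R L (i + j)"
    using ideal_prod_pow_mult_mem[OF m L dy assms(2)] by (simp add: add.commute)
  moreover have "x \<otimes> y \<ominus> x' \<otimes> y' = (x \<ominus> x') \<otimes> y \<oplus> (y \<ominus> y') \<otimes> x'"
    using carr by algebra
  ultimately have "x \<otimes> y \<ominus> x' \<otimes> y' \<in> fib_den R m L (i + j)"
    unfolding fib_den_def
    using additive_subgroup.a_closed[OF ideal.axioms(1)[OF fib_den_ideal[OF m L, unfolded fib_den_def]]]
    by simp
  then show ?thesis
    using rcos_eq_iff[OF fib_den_ideal[OF m L]] carr by simp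
qed

lemma fiber_class_mult:
  assumes "\<And>n. a n \<in> ideal_pow R L n" "\<And>n. b n \<in> ideal_pow R L n"
  shows "fiber_class R m L a \<otimes>\<^bsub>special_fiber R m L\<^esub> fiber_class R m L b =
    fiber_class R m L (\<lambda>n. \<Oplus>i\<in>{..n}. a i \<otimes> b (n - i))"
  unfolding special_fiber_mult fiber_class_def
proof (rule ext, rule rcos_finsum_cong[OF fib_den_ideal[OF m L]])
  have rep: "\<And>k c. c \<in> ideal_pow R L k \<Longrightarrow> rep (fib_den R m L k +> c) \<in> carrier R"
    using rep_fib_den_rcos(1) ideal.Icarr[OF ideal_pow_ideal[OF L]] by blast
  have carr: "\<And>k c. c \<in> ideal_pow R L k \<Longrightarrow> c \<in> carrier R"
    using ideal.Icarr[OF ideal_pow_ideal[OF L]] by blast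
  fix n
  show "(\<lambda>i. rep (fib_den R m L i +> a i) \<otimes> rep (fib_den R m L (n - i) +> b (n - i))) \<in> {..n} \<rightarrow> carrier R"
    using rep[OF assms(1)] rep[OF assms(2)] by auto
  show "(\<lambda>i. a i \<otimes> b (n - i)) \<in> {..n} \<rightarrow> carrier R"
    using carr[OF assms(1)] carr[OF assms(2)] by auto
  fix i assume "i \<in> {..n}"
  then have "n = i + (n - i)" by simp
  then show "fib_den R m L n +> rep (fib_den R m L i +> a i) \<otimes> rep (fib_den R m L (n - i) +> b (n - i)) =
      fib_den R m L n +> a i \<otimes> b (n - i)"
    using fib_den_mult_cong[OF rep_fib_den_rcos(1)[OF assms(1)] assms(1)
        rep_fib_den_rcos(1)[OF assms(2)] assms(2) rep_fib_den_rcos(2)[OF assms(1)]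
        rep_fib_den_rcos(2)[OF assms(2)]]
    by metis
qed

lemma fiber_seq_conv:
  assumes "fiber_seq R m L a" "fiber_seq R m L b"
  shows "fiber_seq R m L (\<lambda>n. \<Oplus>i\<in>{..n}. a i \<otimes> b (n - i))"
proof -
  have a: "\<And>n. a n \<in> ideal_pow R L n" and b: "\<And>n. b n \<in> ideal_pow R L n"
    using assms unfolding fiber_seq_def by blast+
  obtain N1 where N1: "\<And>n. N1 \<le> n \<Longrightarrow> a n \<in> fib_den R m L n"
    using fiber_seq_eventually[OF assms(1)] by blast
  obtain N2 where N2: "\<And>n. N2 \<le> n \<Longrightarrow> b n \<in> fib_den R m L n"
    using fiber_seq_eventually[OF assms(2)] by blast
  have conv_term: "a i \<otimes> b (n - i) \<in> ideal_pow R L n" if "i \<le> n" for i n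
    using ideal_pow_mult_mem[OF L a b] that by (metis le_add_diff_inverse)
  have "a i \<otimes> b (n - i) \<in> fib_den R m L n" if "i \<le> n" "N1 + N2 \<le> n" for i n
  proof (cases "N1 \<le> i")
    case True
    then show ?thesis
      using ideal_prod_pow_mult_mem[OF m L N1[OF True, unfolded fib_den_def] b, of "n - i"] that(1)
      unfolding fib_den_def by simp
  next
    case False
    then have "b (n - i) \<in> m \<cdot> ideal_pow R L (n - i)"
      using N2 that unfolding fib_den_def by simp
    then have "b (n - i) \<otimes> a i \<in> fib_den R m L n"
      using ideal_prod_pow_mult_mem[OF m L _ a, of "b (n - i)" "n - i" i] that(1) unfolding fib_den_def by simp
    then show ?thesis
      using a b ideal.Icarr[OF ideal_pow_ideal[OF L]] by (metis m_comm)
  qed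
  then have "(\<Oplus>i\<in>{..n}. a i \<otimes> b (n - i)) \<in> fib_den R m L n" if "N1 + N2 \<le> n" for n
    using that by (intro ideal_finsum[OF fib_den_ideal[OF m L]]) auto
  then have "{n. (\<Oplus>i\<in>{..n}. a i \<otimes> b (n - i)) \<notin> fib_den R m L n} \<subseteq> {..<N1 + N2}"
    by (auto simp: not_less[symmetric])
  moreover have "(\<Oplus>i\<in>{..n}. a i \<otimes> b (n - i)) \<in> ideal_pow R L n" for n
    using conv_term by (intro ideal_finsum[OF ideal_pow_ideal[OF L]]) auto
  ultimately show ?thesis
    unfolding fiber_seq_def by (blast intro: finite_subset)
qed
end

lemma fiber_seq_single:
  assumes "ideal m R" "ideal L R" "t \<in> ideal_pow R L d"
  shows "fiber_seq R m L (\<lambda>k. if k = d then t else \<zero>)"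
proof -
  have "\<zero> \<in> fib_den R m L k" "\<zero> \<in> ideal_pow R L k" for k
    using additive_subgroup.zero_closed[OF ideal.axioms(1)[OF fib_den_ideal[OF assms(1,2)]]]
      additive_subgroup.zero_closed[OF ideal.axioms(1)[OF ideal_pow_ideal[OF assms(2)]]] by blast+
  then have "{k. (if k = d then t else \<zero>) \<notin> fib_den R m L k} \<subseteq> {d}"
    "\<And>k. (if k = d then t else \<zero>) \<in> ideal_pow R L k"
    using assms(3) by auto
  then show ?thesis
    unfolding fiber_seq_def by (blast intro: finite_subset)
qed

lemma special_fiber_finite_reps:
  assumes m: "ideal m R" and L: "ideal L R"
    and G: "finite G" "G \<subseteq> carrier (special_fiber R m L)"
  obtains a N where "\<And>g. g \<in> G \<Longrightarrow> fiber_seq R m L (a g) \<and> g = fiber_class R m L (a g)"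
    and "\<And>g n. g \<in> G \<Longrightarrow> N \<le> n \<Longrightarrow> a g n \<in> fib_den R m L n"
proof -
  have "\<exists>a. fiber_seq R m L a \<and> g = fiber_class R m L a" if "g \<in> G" for g
    by (rule special_fiber_elemE[OF m L subsetD[OF G(2) that]]) blast
  then have "\<forall>g\<in>G. \<exists>a. fiber_seq R m L a \<and> g = fiber_class R m L a"
    by blast
  then obtain a where a: "\<forall>g\<in>G. fiber_seq R m L (a g) \<and> g = fiber_class R m L (a g)"
    by (rule bchoice[THEN exE])
  have "finite (\<Union>g\<in>G. {n. a g n \<notin> fib_den R m L n})"
    using G(1) a unfolding fiber_seq_def by blast
  then obtain N where N: "\<forall>n\<in>(\<Union>g\<in>G. {n. a g n \<notin> fib_den R m L n}). n < N"
    unfolding finite_nat_set_iff_bounded by blast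
  have "a g n \<in> fib_den R m L n" if "g \<in> G" "N \<le> n" for g n
  proof (rule ccontr)
    assume "a g n \<notin> fib_den R m L n"
    then have "n < N"
      using N that(1) by blast
    then show False
      using that(2) by simp
  qed
  then show thesis
    using that a by blast
qed

lemma fiber_combination_class:
  assumes m: "ideal m R" and A: "ideal A R" and K: "ideal K R" and I: "ideal I R"
    and AI: "A \<subseteq> I" and KI: "K \<subseteq> I" and G: "finite G"
    and y: "fiber_seq R m K k" "y = fiber_class R m K k"
    and c: "\<And>g. g \<in> G \<Longrightarrow> fiber_seq R m A (ac g) \<and> c g = fiber_class R m A (ac g)"
    and g: "\<And>g. g \<in> G \<Longrightarrow> fiber_seq R m I (ag g) \<and> g = fiber_class R m I (ag g)"
  shows "fib_map R m K I y \<oplus>\<^bsub>special_fiber R m I\<^esub>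
      (\<Oplus>\<^bsub>special_fiber R m I\<^esub>g\<in>G. fib_map R m A I (c g) \<otimes>\<^bsub>special_fiber R m I\<^esub> g) =
    fiber_class R m I (\<lambda>n. k n \<oplus> (\<Oplus>g\<in>G. \<Oplus>i\<in>{..n}. ac g i \<otimes> ag g (n - i)))"
proof -
  let ?F = "special_fiber R m I"
  let ?conv = "\<lambda>g n. \<Oplus>i\<in>{..n}. ac g i \<otimes> ag g (n - i)"
  have acI: "fiber_seq R m I (ac g)" if "g \<in> G" for g
    using fiber_seq_mono[OF m A I AI] c[OF that] by blast
  have conv: "fiber_seq R m I (?conv g)" if "g \<in> G" for g
    using fiber_seq_conv[OF m I acI[OF that]] g[OF that] by blast
  have "fib_map R m A I (c g) \<otimes>\<^bsub>?F\<^esub> g = fiber_class R m I (?conv g)" if "g \<in> G" for g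
  proof -
    have cg: "fiber_seq R m A (ac g)" "c g = fiber_class R m A (ac g)"
      and gg: "fiber_seq R m I (ag g)" "g = fiber_class R m I (ag g)"
      using c[OF that] g[OF that] by blast+
    have "fib_map R m A I (c g) = fiber_class R m I (ac g)"
      unfolding cg(2) using fib_map_fiber_class[OF m A I AI fiber_seq_carrier[OF m A cg(1)]] .
    moreover have "fiber_class R m I (ac g) \<otimes>\<^bsub>?F\<^esub> fiber_class R m I (ag g) = fiber_class R m I (?conv g)"
      using fiber_class_mult[OF m I] acI[OF that] gg(1) unfolding fiber_seq_def by blast
    ultimately show ?thesis
      using gg(2) by simp
  qed
  then have "(\<Oplus>\<^bsub>?F\<^esub>g\<in>G. fib_map R m A I (c g) \<otimes>\<^bsub>?F\<^esub> g) =
      (\<Oplus>\<^bsub>?F\<^esub>g\<in>G. fiber_class R m I (?conv g))"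
    using fiber_class_closed[OF m I conv]
    by (intro abelian_monoid.finsum_cong'[OF special_fiber_abelian_monoid[OF m I]]) auto
  also have "\<dots> = fiber_class R m I (\<lambda>n. \<Oplus>g\<in>G. ?conv g n)"
    using fiber_class_finsum[OF m I G conv] .
  finally have sum: "(\<Oplus>\<^bsub>?F\<^esub>g\<in>G. fib_map R m A I (c g) \<otimes>\<^bsub>?F\<^esub> g) =
      fiber_class R m I (\<lambda>n. \<Oplus>g\<in>G. ?conv g n)" .
  have "fib_map R m K I y = fiber_class R m I k"
    unfolding y(2) using fib_map_fiber_class[OF m K I KI fiber_seq_carrier[OF m K y(1)]] .
  moreover have "(\<lambda>n. \<Oplus>g\<in>G. ?conv g n) n \<in> carrier R" for n
    using conv fiber_seq_carrier[OF m I] by (auto intro: finsum_closed)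
  ultimately show ?thesis
    unfolding sum using fiber_class_add[OF m I] fiber_seq_carrier[OF m K y(1)] by simp
qed

subsection \<open>From a finite cokernel to a reduction\<close>

lemma convolution_mem_reduction_mod:
  assumes m: "ideal m R" and A: "ideal A R" and I: "ideal I R" and AI: "A \<subseteq> I"
    and c: "\<And>i. c i \<in> ideal_pow R A i" and a: "\<And>i. a i \<in> ideal_pow R I i"
    and top: "a (Suc n) \<in> fib_den R m I (Suc n)"
  shows "(\<Oplus>i\<in>{..Suc n}. c i \<otimes> a (Suc n - i)) \<in> A \<cdot> ideal_pow R I n <+>\<^bsub>R\<^esub> fib_den R m I (Suc n)"
proof (rule ideal_finsum)
  have AIn: "ideal (A \<cdot> ideal_pow R I n) R"
    using ideal_prod_is_ideal[OF A ideal_pow_ideal[OF I]] .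
  show "ideal (A \<cdot> ideal_pow R I n <+>\<^bsub>R\<^esub> fib_den R m I (Suc n)) R"
    using add_ideals[OF AIn fib_den_ideal[OF m I]] .
  fix i assume i: "i \<in> {..Suc n}"
  show "c i \<otimes> a (Suc n - i) \<in> A \<cdot> ideal_pow R I n <+>\<^bsub>R\<^esub> fib_den R m I (Suc n)"
  proof (cases i)
    case 0
    have "c 0 \<in> carrier R"
      using c[of 0] by simp
    then have "c i \<otimes> a (Suc n - i) \<in> fib_den R m I (Suc n)"
      using ideal.I_l_closed[OF fib_den_ideal[OF m I] top] 0 by simp
    then show ?thesis
      using ideal_subset_set_add(2)[OF AIn fib_den_ideal[OF m I]] by blast
  next
    case (Suc i')
    have "c i \<in> A \<cdot> ideal_pow R I i'"
      using c[of i] ideal_pow_Suc_subset[OF A I AI] Suc by blast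
    then have "c i \<otimes> a (Suc n - i) \<in> A \<cdot> ideal_pow R I (i' + (Suc n - i))"
      using ideal_prod_pow_mult_mem[OF A I _ a] by blast
    moreover have "i' + (Suc n - i) = n"
      using i Suc by simp
    ultimately show ?thesis
      using ideal_subset_set_add(1)[OF AIn fib_den_ideal[OF m I]] by auto
  qed
qed simp

lemma fiber_decomposition_mem_reduction_mod:
  assumes m: "ideal m R" and A: "ideal A R" and K: "ideal K R" and I: "ideal I R"
    and AI: "A \<subseteq> I" and G: "finite G"
    and k: "fiber_seq R m K k" and ac: "\<And>g. g \<in> G \<Longrightarrow> fiber_seq R m A (ac g)"
    and ag: "\<And>g. g \<in> G \<Longrightarrow> fiber_seq R m I (ag g) \<and> ag g (Suc n) \<in> fib_den R m I (Suc n)"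
  shows "k (Suc n) \<oplus> (\<Oplus>g\<in>G. \<Oplus>i\<in>{..Suc n}. ac g i \<otimes> ag g (Suc n - i)) \<in>
    (ideal_pow R K (Suc n) <+>\<^bsub>R\<^esub> A \<cdot> ideal_pow R I n) <+>\<^bsub>R\<^esub> fib_den R m I (Suc n)"
    (is "_ \<in> ?T")
proof -
  have KAI: "ideal (ideal_pow R K (Suc n) <+>\<^bsub>R\<^esub> A \<cdot> ideal_pow R I n) R"
    using add_ideals[OF ideal_pow_ideal[OF K] ideal_prod_is_ideal[OF A ideal_pow_ideal[OF I]]] .
  have T: "ideal ?T R"
    using add_ideals[OF KAI fib_den_ideal[OF m I]] .
  have sub: "ideal_pow R K (Suc n) \<subseteq> ?T" "A \<cdot> ideal_pow R I n \<subseteq> ?T" "fib_den R m I (Suc n) \<subseteq> ?T"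
    using ideal_subset_set_add[OF ideal_pow_ideal[OF K] ideal_prod_is_ideal[OF A ideal_pow_ideal[OF I]]]
      ideal_subset_set_add[OF KAI fib_den_ideal[OF m I]] by blast+
  have "(\<Oplus>i\<in>{..Suc n}. ac g i \<otimes> ag g (Suc n - i)) \<in> ?T" if g: "g \<in> G" for g
  proof -
    have "(\<Oplus>i\<in>{..Suc n}. ac g i \<otimes> ag g (Suc n - i)) \<in>
        A \<cdot> ideal_pow R I n <+>\<^bsub>R\<^esub> fib_den R m I (Suc n)"
      using convolution_mem_reduction_mod[OF m A I AI] ac[OF g] ag[OF g] unfolding fiber_seq_def by blast
    then show ?thesis
      using set_add_subset_ideal[OF T sub(2,3)] by blast
  qed
  then have "(\<Oplus>g\<in>G. \<Oplus>i\<in>{..Suc n}. ac g i \<otimes> ag g (Suc n - i)) \<in> ?T"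
    by (rule ideal_finsum[OF T G])
  moreover have "k (Suc n) \<in> ?T"
    using k sub(1) unfolding fiber_seq_def by blast
  ultimately show ?thesis
    using additive_subgroup.a_closed[OF ideal.axioms(1)[OF T]] by blast
qed

lemma coker_finite_over_imp_reduction_mod:
  assumes m: "ideal m R" and A: "ideal A R" and K: "ideal K R" and I: "ideal I R"
    and AI: "A \<subseteq> I" and KI: "K \<subseteq> I" and coker: "coker_finite_over R m A K I"
  obtains N where "\<And>n. N \<le> n \<Longrightarrow> ideal_pow R I (Suc n) \<subseteq>
    (ideal_pow R K (Suc n) <+>\<^bsub>R\<^esub> A \<cdot> ideal_pow R I n) <+>\<^bsub>R\<^esub> fib_den R m I (Suc n)"
proof -
  let ?F = "special_fiber R m I"
  obtain G where G: "finite G" "G \<subseteq> carrier ?F"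
    and gen: "\<forall>z\<in>carrier ?F. \<exists>y\<in>carrier (special_fiber R m K). \<exists>c\<in>G \<rightarrow> carrier (special_fiber R m A).
      z = fib_map R m K I y \<oplus>\<^bsub>?F\<^esub> (\<Oplus>\<^bsub>?F\<^esub>g\<in>G. fib_map R m A I (c g) \<otimes>\<^bsub>?F\<^esub> g)"
    using coker unfolding coker_finite_over_def Let_def by blast
  obtain ag N where ag: "\<And>g. g \<in> G \<Longrightarrow> fiber_seq R m I (ag g) \<and> g = fiber_class R m I (ag g)"
    and N: "\<And>g n. g \<in> G \<Longrightarrow> N \<le> n \<Longrightarrow> ag g n \<in> fib_den R m I n"
    using special_fiber_finite_reps[OF m I G] by blast
  show thesis
  proof (rule that, rule subsetI)
    fix n b assume n: "N \<le> n" and b: "b \<in> ideal_pow R I (Suc n)"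
    define z where "z = fiber_class R m I (\<lambda>k. if k = Suc n then b else \<zero>)"
    have "z \<in> carrier ?F"
      unfolding z_def using fiber_class_closed[OF m I fiber_seq_single[OF m I b]] .
    then obtain y c where y: "y \<in> carrier (special_fiber R m K)"
      and c: "c \<in> G \<rightarrow> carrier (special_fiber R m A)"
      and z: "z = fib_map R m K I y \<oplus>\<^bsub>?F\<^esub> (\<Oplus>\<^bsub>?F\<^esub>g\<in>G. fib_map R m A I (c g) \<otimes>\<^bsub>?F\<^esub> g)"
      using gen by blast
    obtain k where k: "fiber_seq R m K k" "y = fiber_class R m K k"
      using special_fiber_elemE[OF m K y] by blast
    obtain a' where a': "\<And>x. x \<in> c ` G \<Longrightarrow> fiber_seq R m A (a' x) \<and> x = fiber_class R m A (a' x)"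
      by (rule special_fiber_finite_reps[OF m A finite_imageI[OF G(1)] funcset_image[OF c]]) (rule that)
    define s where "s = k (Suc n) \<oplus> (\<Oplus>g\<in>G. \<Oplus>i\<in>{..Suc n}. a' (c g) i \<otimes> ag g (Suc n - i))"
    have "fib_map R m K I y \<oplus>\<^bsub>?F\<^esub> (\<Oplus>\<^bsub>?F\<^esub>g\<in>G. fib_map R m A I (c g) \<otimes>\<^bsub>?F\<^esub> g) =
        fiber_class R m I (\<lambda>n. k n \<oplus> (\<Oplus>g\<in>G. \<Oplus>i\<in>{..n}. a' (c g) i \<otimes> ag g (n - i)))"
      by (rule fiber_combination_class[OF m A K I AI KI G(1) k]) (use a' ag in blast)+
    then have seq: "fib_den R m I (Suc n) +> b = fib_den R m I (Suc n) +> s"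
      using fun_cong[OF z, of "Suc n"] unfolding z_def s_def fiber_class_def by simp
    have acs: "\<And>g. g \<in> G \<Longrightarrow> fiber_seq R m A (a' (c g))"
      using a' by blast
    have ags: "\<And>g. g \<in> G \<Longrightarrow> fiber_seq R m I (ag g) \<and> ag g (Suc n) \<in> fib_den R m I (Suc n)"
      using ag N n by simp
    have "s \<in> (ideal_pow R K (Suc n) <+>\<^bsub>R\<^esub> A \<cdot> ideal_pow R I n) <+>\<^bsub>R\<^esub> fib_den R m I (Suc n)"
      unfolding s_def by (rule fiber_decomposition_mem_reduction_mod[OF m A K I AI G(1) k(1) acs ags])
    moreover have "s \<in> carrier R"
      unfolding s_def using fiber_seq_carrier[OF m K k(1)] fiber_seq_carrier[OF m A acs]
        fiber_seq_carrier[OF m I] ags by (auto intro!: finsum_closed)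
    moreover have KAI: "ideal (ideal_pow R K (Suc n) <+>\<^bsub>R\<^esub> A \<cdot> ideal_pow R I n) R"
      using add_ideals[OF ideal_pow_ideal[OF K] ideal_prod_is_ideal[OF A ideal_pow_ideal[OF I]]] .
    ultimately show "b \<in> (ideal_pow R K (Suc n) <+>\<^bsub>R\<^esub> A \<cdot> ideal_pow R I n) <+>\<^bsub>R\<^esub> fib_den R m I (Suc n)"
      using rcos_eq_mem[OF fib_den_ideal[OF m I] add_ideals[OF KAI fib_den_ideal[OF m I]]
          ideal_subset_set_add(2)[OF KAI fib_den_ideal[OF m I]] ideal.Icarr[OF ideal_pow_ideal[OF I] b]]
        seq by blast
  qed
qed

lemma coker_finite_over_imp_reduction:
  assumes noeth: "noetherian_ring R" and loc: "local_ring R m"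
    and A: "ideal A R" and J: "ideal J R" and K: "ideal K R" and I: "ideal I R"
    and AI: "A \<subseteq> I" and JI: "J \<subseteq> I" and KI: "K \<subseteq> I" and KAJ: "K \<subseteq> A <+>\<^bsub>R\<^esub> J"
    and coker: "coker_finite_over R m A K I"
  shows "\<exists>N. \<forall>n\<ge>N. ideal_pow R I n = A \<cdot> ideal_pow R I (n - 1) <+>\<^bsub>R\<^esub> ideal_pow R J n"
proof -
  have m: "ideal m R"
    using local_ring_ideal[OF loc] .
  obtain N where N: "\<And>n. N \<le> n \<Longrightarrow> ideal_pow R I (Suc n) \<subseteq>
      (ideal_pow R K (Suc n) <+>\<^bsub>R\<^esub> A \<cdot> ideal_pow R I n) <+>\<^bsub>R\<^esub> fib_den R m I (Suc n)"
    using coker_finite_over_imp_reduction_mod[OF m A K I AI KI coker] by blast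
  have "ideal_pow R I (Suc n) = A \<cdot> ideal_pow R I n <+>\<^bsub>R\<^esub> ideal_pow R J (Suc n)" if n: "N \<le> n" for n
  proof
    let ?T = "A \<cdot> ideal_pow R I n <+>\<^bsub>R\<^esub> ideal_pow R J (Suc n)"
    have T: "ideal ?T R"
      using add_ideals[OF ideal_prod_is_ideal[OF A ideal_pow_ideal[OF I]] ideal_pow_ideal[OF J]] .
    have "ideal_pow R K (Suc n) \<subseteq> ?T"
      by (rule order_trans[OF ideal_pow_mono[OF K add_ideals[OF A J] KAJ]
            ideal_pow_Suc_subset_reduction[OF A J I AI JI]])
    moreover have "A \<cdot> ideal_pow R I n \<subseteq> ?T"
      using ideal_subset_set_add(1)[OF ideal_prod_is_ideal[OF A ideal_pow_ideal[OF I]] ideal_pow_ideal[OF J]] .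
    ultimately have "ideal_pow R K (Suc n) <+>\<^bsub>R\<^esub> A \<cdot> ideal_pow R I n \<subseteq> ?T"
      by (rule set_add_subset_ideal[OF T])
    then have "ideal_pow R I (Suc n) \<subseteq> ?T <+>\<^bsub>R\<^esub> m \<cdot> ideal_pow R I (Suc n)"
      using N[OF n] set_add_mono[OF _ order_refl] unfolding fib_den_def by blast
    moreover obtain S where S: "S \<subseteq> carrier R" "finite S" "ideal_pow R I (Suc n) = Idl S"
      using noetherian_ring.finetely_gen[OF noeth ideal_pow_ideal[OF I]] by blast
    ultimately show "ideal_pow R I (Suc n) \<subseteq> ?T"
      using nakayama[OF loc S(2,1) T] by simp
    show "?T \<subseteq> ideal_pow R I (Suc n)"
      using reduction_subset_ideal_pow[OF A J I AI JI] .
  qed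
  then have "\<forall>n\<ge>Suc N. ideal_pow R I n = A \<cdot> ideal_pow R I (n - 1) <+>\<^bsub>R\<^esub> ideal_pow R J n"
    by (metis Suc_diff_1 Suc_le_D Suc_le_mono diff_Suc_1 le_0_eq not_less_eq_eq)
  then show ?thesis
    by blast
qed

end

subsection \<open>From a reduction to a finite cokernel\<close>

text \<open>Degree n part of the F(A)-submodule of F(I) generated by homogeneous classes t g of degree d g:
  the sums of c g t g with c g \<in> A^(n - d g), where c g = 0 if d g > n.\<close>

definition graded_span :: "('a, 'b) ring_scheme \<Rightarrow> 'a set \<Rightarrow> 'c set \<Rightarrow> ('c \<Rightarrow> nat) \<Rightarrow> ('c \<Rightarrow> 'a) \<Rightarrow> nat \<Rightarrow> 'a set" where
  "graded_span R A G d t n =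
    lin_comb R G t (\<lambda>g. if d g \<le> n then ideal_pow R A (n - d g) else {\<zero>\<^bsub>R\<^esub>})"

context cring
begin

lemma graded_span_ideal:
  assumes "ideal A R" "finite G" "t \<in> G \<rightarrow> carrier R"
  shows "ideal (graded_span R A G d t n) R"
  unfolding graded_span_def using assms by (intro lin_comb_ideal) (auto intro: ideal_pow_ideal zeroideal)

lemma graded_span_generator:
  assumes "ideal A R" "finite G" "t \<in> G \<rightarrow> carrier R" "g \<in> G"
  shows "t g \<in> graded_span R A G d t (d g)"
  unfolding graded_span_def using assms ideal_pow_ideal[OF assms(1)]
  by (intro lin_comb_single) (auto simp: additive_subgroup.zero_closed ideal.axioms(1))

lemma graded_span_mult:
  assumes A: "ideal A R" and G: "finite G" "t \<in> G \<rightarrow> carrier R" and d: "\<And>g. g \<in> G \<Longrightarrow> d g \<le> n"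
    and a: "a \<in> A" and x: "x \<in> graded_span R A G d t n"
  shows "a \<otimes> x \<in> graded_span R A G d t (Suc n)"
proof -
  obtain h where h0: "h \<in> Pi G (\<lambda>g. if d g \<le> n then ideal_pow R A (n - d g) else {\<zero>})"
    and x_eq: "x = (\<Oplus>g\<in>G. h g \<otimes> t g)"
    using x unfolding graded_span_def lin_comb_def by blast
  have h: "h g \<in> ideal_pow R A (n - d g)" if "g \<in> G" for g
    using h0 d[OF that] that by (auto simp: Pi_iff)
  have hc: "h \<in> G \<rightarrow> carrier R"
    using h ideal.Icarr[OF ideal_pow_ideal[OF A]] by blast
  have ac: "a \<in> carrier R"
    using ideal.Icarr[OF A a] .
  have "a \<otimes> h g \<in> ideal_pow R A (Suc n - d g)" if g: "g \<in> G" for g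
  proof -
    have "h g \<otimes> a \<in> ideal_pow R A (Suc (n - d g))"
      using ideal_prod.prod[OF h[OF g] a] by (simp add: ideal_pow_Suc)
    moreover have "Suc (n - d g) = Suc n - d g"
      using d[OF g] by simp
    ultimately show ?thesis
      using hc g ac by (simp add: m_comm Pi_iff)
  qed
  then have "(\<lambda>g. a \<otimes> h g) \<in> Pi G (\<lambda>g. if d g \<le> Suc n then ideal_pow R A (Suc n - d g) else {\<zero>})"
    using d by (auto simp: le_SucI)
  then show ?thesis
    unfolding graded_span_def lin_comb_def x_eq lin_comb_smult[OF G hc ac]
    by (blast intro: exI[of _ "\<lambda>g. a \<otimes> h g"])
qed

lemma finsum_conv_single:
  fixes n d :: nat
  assumes "\<And>i. c i \<in> carrier R" "t \<in> carrier R" "n < d \<Longrightarrow> c n = \<zero>"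
  shows "(\<Oplus>i\<in>{..n}. c (i + d) \<otimes> (if n - i = d then t else \<zero>)) = c n \<otimes> t"
proof (cases "d \<le> n")
  case True
  have "(\<Oplus>i\<in>{..n}. c (i + d) \<otimes> (if n - i = d then t else \<zero>)) =
      (\<Oplus>i\<in>{..n}. if n - d = i then c (i + d) \<otimes> t else \<zero>)"
  proof (intro finsum_cong')
    fix i assume "i \<in> {..n}"
    then have "n - i = d \<longleftrightarrow> n - d = i"
      using True by auto
    then show "c (i + d) \<otimes> (if n - i = d then t else \<zero>) = (if n - d = i then c (i + d) \<otimes> t else \<zero>)"
      using assms by simp
  qed (use assms in auto)
  also have "\<dots> = c n \<otimes> t"
    using finsum_singleton[of "n - d" "{..n}" "\<lambda>i. c (i + d) \<otimes> t"] assms True by simp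
  finally show ?thesis .
next
  case False
  then have "(\<Oplus>i\<in>{..n}. c (i + d) \<otimes> (if n - i = d then t else \<zero>)) = (\<Oplus>i\<in>{..n}. \<zero>)"
    using assms by (intro finsum_cong') auto
  then show ?thesis
    using False assms by simp
qed

lemma graded_span_reduction_step:
  assumes m: "ideal m R" and A: "ideal A R" and K: "ideal K R" and I: "ideal I R"
    and AK: "A \<subseteq> K" and AI: "A \<subseteq> I" and G: "finite G" "t \<in> G \<rightarrow> carrier R"
    and d: "\<And>g. g \<in> G \<Longrightarrow> d g \<le> n"
  shows "A \<cdot> ((ideal_pow R K n <+>\<^bsub>R\<^esub> graded_span R A G d t n) <+>\<^bsub>R\<^esub> fib_den R m I n) \<subseteq>
    (ideal_pow R K (Suc n) <+>\<^bsub>R\<^esub> graded_span R A G d t (Suc n)) <+>\<^bsub>R\<^esub> fib_den R m I (Suc n)"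
proof (rule ideal_prod_subset)
  show "ideal ((ideal_pow R K (Suc n) <+>\<^bsub>R\<^esub> graded_span R A G d t (Suc n)) <+>\<^bsub>R\<^esub> fib_den R m I (Suc n)) R"
    using A G by (intro add_ideals ideal_pow_ideal graded_span_ideal fib_den_ideal m I K)
  fix a b
  assume a: "a \<in> A" and "b \<in> (ideal_pow R K n <+>\<^bsub>R\<^esub> graded_span R A G d t n) <+>\<^bsub>R\<^esub> fib_den R m I n"
  then obtain k \<sigma> \<delta> where k: "k \<in> ideal_pow R K n" and \<sigma>: "\<sigma> \<in> graded_span R A G d t n"
    and \<delta>: "\<delta> \<in> fib_den R m I n" and b: "b = (k \<oplus> \<sigma>) \<oplus> \<delta>"
    unfolding set_add_def' by blast
  have carr: "a \<in> carrier R" "k \<in> carrier R" "\<sigma> \<in> carrier R" "\<delta> \<in> carrier R"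
    using ideal.Icarr[OF A a] ideal.Icarr[OF ideal_pow_ideal[OF K] k]
      ideal.Icarr[OF graded_span_ideal[OF A G] \<sigma>] ideal.Icarr[OF fib_den_ideal[OF m I] \<delta>] by auto
  have "k \<otimes> a \<in> ideal_pow R K (Suc n)"
    using ideal_prod.prod[OF k] a AK by (auto simp: ideal_pow_Suc)
  moreover have "\<delta> \<otimes> a \<in> fib_den R m I (Suc n)"
  proof -
    have "a \<in> ideal_pow R I 1"
      using a AI ideal_pow_1[OF I] by auto
    then have "\<delta> \<otimes> a \<in> m \<cdot> ideal_pow R I (n + 1)"
      by (rule ideal_prod_pow_mult_mem[OF m I \<delta>[unfolded fib_den_def]])
    then show ?thesis
      unfolding fib_den_def by simp
  qed
  moreover have "a \<otimes> \<sigma> \<in> graded_span R A G d t (Suc n)"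
    using graded_span_mult[OF A G d a \<sigma>] .
  moreover have "a \<otimes> b = (k \<otimes> a \<oplus> a \<otimes> \<sigma>) \<oplus> \<delta> \<otimes> a"
    using carr b by algebra
  ultimately show "a \<otimes> b \<in> (ideal_pow R K (Suc n) <+>\<^bsub>R\<^esub> graded_span R A G d t (Suc n)) <+>\<^bsub>R\<^esub>
      fib_den R m I (Suc n)"
    by (simp add: set_add_memI)
qed

lemma ideal_pow_subset_graded_span:
  assumes m: "ideal m R" and A: "ideal A R" and J: "ideal J R" and K: "ideal K R" and I: "ideal I R"
    and AK: "A \<subseteq> K" and JK: "J \<subseteq> K" and AI: "A \<subseteq> I"
    and G: "finite G" "t \<in> G \<rightarrow> carrier R" and d: "\<And>g. g \<in> G \<Longrightarrow> d g \<le> N"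
    and base: "\<And>n. n \<le> N \<Longrightarrow>
      ideal_pow R I n \<subseteq> (ideal_pow R K n <+>\<^bsub>R\<^esub> graded_span R A G d t n) <+>\<^bsub>R\<^esub> fib_den R m I n"
    and reduction: "\<And>n. N \<le> n \<Longrightarrow> ideal_pow R I (Suc n) = A \<cdot> ideal_pow R I n <+>\<^bsub>R\<^esub> ideal_pow R J (Suc n)"
  shows "ideal_pow R I n \<subseteq> (ideal_pow R K n <+>\<^bsub>R\<^esub> graded_span R A G d t n) <+>\<^bsub>R\<^esub> fib_den R m I n"
proof (induction n)
  case 0
  show ?case
    using base[of 0] by blast
next
  case (Suc n)
  let ?T = "\<lambda>n. (ideal_pow R K n <+>\<^bsub>R\<^esub> graded_span R A G d t n) <+>\<^bsub>R\<^esub> fib_den R m I n"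
  have T: "ideal (?T n) R" for n
    using A G by (intro add_ideals ideal_pow_ideal graded_span_ideal fib_den_ideal m I K)
  show ?case
  proof (cases "N \<le> n")
    case False
    then show ?thesis
      using base[of "Suc n"] by simp
  next
    case True
    have "A \<cdot> ideal_pow R I n \<subseteq> A \<cdot> ?T n"
      using ideal_prod_mono[OF A T order_refl Suc.IH] .
    also have "\<dots> \<subseteq> ?T (Suc n)"
      using graded_span_reduction_step[OF m A K I AK AI G] d True le_trans by blast
    finally have "A \<cdot> ideal_pow R I n \<subseteq> ?T (Suc n)" .
    moreover have "ideal_pow R J (Suc n) \<subseteq> ?T (Suc n)"
      using ideal_pow_mono[OF J K JK]
        ideal_subset_set_add(1)[OF ideal_pow_ideal[OF K] graded_span_ideal[OF A G]]
        ideal_subset_set_add(1)[OF add_ideals[OF ideal_pow_ideal[OF K] graded_span_ideal[OF A G]]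
          fib_den_ideal[OF m I]]
      by blast
    ultimately show ?thesis
      using reduction[OF True] set_add_subset_ideal[OF T] by simp
  qed
qed

lemma graded_span_rcos_decomposition:
  assumes m: "ideal m R" and A: "ideal A R" and K: "ideal K R" and I: "ideal I R"
    and G: "finite G" "t \<in> G \<rightarrow> carrier R"
    and x: "x \<in> (ideal_pow R K n <+>\<^bsub>R\<^esub> graded_span R A G d t n) <+>\<^bsub>R\<^esub> fib_den R m I n"
  obtains k \<alpha> where "k \<in> ideal_pow R K n"
    and "\<alpha> \<in> Pi G (\<lambda>g. if d g \<le> n then ideal_pow R A (n - d g) else {\<zero>})"
    and "fib_den R m I n +> x = fib_den R m I n +> (k \<oplus> (\<Oplus>g\<in>G. \<alpha> g \<otimes> t g))"
proof -
  obtain k \<sigma> \<delta> where k: "k \<in> ideal_pow R K n" and \<sigma>: "\<sigma> \<in> graded_span R A G d t n"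
    and \<delta>: "\<delta> \<in> fib_den R m I n" and x_eq: "x = (k \<oplus> \<sigma>) \<oplus> \<delta>"
    using x unfolding set_add_def' by blast
  obtain \<alpha> where \<alpha>: "\<alpha> \<in> Pi G (\<lambda>g. if d g \<le> n then ideal_pow R A (n - d g) else {\<zero>})"
    and \<sigma>_eq: "\<sigma> = (\<Oplus>g\<in>G. \<alpha> g \<otimes> t g)"
    using \<sigma> unfolding graded_span_def lin_comb_def by blast
  have "k \<oplus> \<sigma> \<in> carrier R" "\<delta> \<in> carrier R"
    using ideal.Icarr[OF ideal_pow_ideal[OF K] k] ideal.Icarr[OF graded_span_ideal[OF A G] \<sigma>]
      ideal.Icarr[OF fib_den_ideal[OF m I] \<delta>] by auto
  moreover have "((k \<oplus> \<sigma>) \<oplus> \<delta>) \<ominus> (k \<oplus> \<sigma>) = \<delta>"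
    using calculation by algebra
  ultimately have "fib_den R m I n +> x = fib_den R m I n +> (k \<oplus> \<sigma>)"
    unfolding x_eq using \<delta> rcos_eq_iff[OF fib_den_ideal[OF m I]] by simp
  then show thesis
    using that k \<alpha> \<sigma>_eq by blast
qed

text \<open>The last property keeps the sequences built from k and \<alpha> finitely supported.\<close>

lemma graded_span_decomposition:
  assumes m: "ideal m R" and A: "ideal A R" and K: "ideal K R" and I: "ideal I R"
    and G: "finite G" "t \<in> G \<rightarrow> carrier R"
    and span: "\<And>n. ideal_pow R I n \<subseteq>
      (ideal_pow R K n <+>\<^bsub>R\<^esub> graded_span R A G d t n) <+>\<^bsub>R\<^esub> fib_den R m I n"
    and z: "fiber_seq R m I z"
  obtains k \<alpha> where "\<And>n. k n \<in> ideal_pow R K n"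
    and "\<And>n. \<alpha> n \<in> Pi G (\<lambda>g. if d g \<le> n then ideal_pow R A (n - d g) else {\<zero>})"
    and "\<And>n. fib_den R m I n +> z n = fib_den R m I n +> (k n \<oplus> (\<Oplus>g\<in>G. \<alpha> n g \<otimes> t g))"
    and "\<And>n. z n \<in> fib_den R m I n \<Longrightarrow> k n = \<zero> \<and> (\<forall>g\<in>G. \<alpha> n g = \<zero>)"
proof -
  let ?Q = "\<lambda>n g. if d g \<le> n then ideal_pow R A (n - d g) else {\<zero>}"
  have Q: "ideal (?Q n g) R" for n g
    using ideal_pow_ideal[OF A] zeroideal by simp
  define P where "P n k \<alpha> \<longleftrightarrow> k \<in> ideal_pow R K n \<and> \<alpha> \<in> Pi G (?Q n) \<and>
      fib_den R m I n +> z n = fib_den R m I n +> (k \<oplus> (\<Oplus>g\<in>G. \<alpha> g \<otimes> t g)) \<and>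
      (z n \<in> fib_den R m I n \<longrightarrow> k = \<zero> \<and> (\<forall>g\<in>G. \<alpha> g = \<zero>))" for n k \<alpha>
  have "\<exists>k \<alpha>. P n k \<alpha>" for n
  proof (cases "z n \<in> fib_den R m I n")
    case True
    have "(\<Oplus>g\<in>G. \<zero> \<otimes> t g) = (\<Oplus>g\<in>G. \<zero>)"
      using G(2) by (intro finsum_cong') (auto simp: Pi_iff)
    then have "(\<Oplus>g\<in>G. \<zero> \<otimes> t g) = \<zero>"
      by simp
    moreover have "fib_den R m I n +> z n = fib_den R m I n" "fib_den R m I n +> \<zero> = fib_den R m I n"
      using True rcos_eq_self_iff[OF fib_den_ideal[OF m I]] fiber_seq_carrier[OF m I z]
        additive_subgroup.zero_closed[OF ideal.axioms(1)[OF fib_den_ideal[OF m I]]] by auto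
    ultimately have "fib_den R m I n +> z n = fib_den R m I n +> (\<zero> \<oplus> (\<Oplus>g\<in>G. \<zero> \<otimes> t g))"
      by simp
    then have "P n \<zero> (\<lambda>g. \<zero>)"
      unfolding P_def using True additive_subgroup.zero_closed[OF ideal.axioms(1)] ideal_pow_ideal[OF K] Q
      by auto
    then show ?thesis by blast
  next
    case False
    have "z n \<in> ideal_pow R I n"
      using z unfolding fiber_seq_def by blast
    then obtain k \<alpha> where "k \<in> ideal_pow R K n" "\<alpha> \<in> Pi G (?Q n)"
      "fib_den R m I n +> z n = fib_den R m I n +> (k \<oplus> (\<Oplus>g\<in>G. \<alpha> g \<otimes> t g))"
      using graded_span_rcos_decomposition[OF m A K I G] span by blast
    then have "P n k \<alpha>"
      unfolding P_def using False by simp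
    then show ?thesis by blast
  qed
  then obtain k \<alpha> where "\<forall>n. P n (k n) (\<alpha> n)"
    by metis
  then show thesis
    using that unfolding P_def by blast
qed

lemma graded_coefficient_fiber_seq:
  assumes m: "ideal m R" and A: "ideal A R" and z: "fiber_seq R m I z" and g: "g \<in> G"
    and \<alpha>: "\<And>n. \<alpha> n \<in> Pi G (\<lambda>g. if d g \<le> n then ideal_pow R A (n - d g) else {\<zero>})"
    and small: "\<And>n. z n \<in> fib_den R m I n \<Longrightarrow> \<alpha> n g = \<zero>"
  shows "fiber_seq R m A (\<lambda>i. \<alpha> (i + d g) g)"
proof -
  have "\<alpha> (i + d g) g \<in> ideal_pow R A i" for i
    using \<alpha>[of "i + d g"] g by (auto simp: Pi_iff)
  moreover have "{i. \<alpha> (i + d g) g \<notin> fib_den R m A i} \<subseteq> (\<lambda>i. i + d g) -` {n. z n \<notin> fib_den R m I n}"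
    using small additive_subgroup.zero_closed[OF ideal.axioms(1)[OF fib_den_ideal[OF m A]]] by auto
  moreover have "finite ((\<lambda>i. i + d g) -` {n. z n \<notin> fib_den R m I n})"
    using z unfolding fiber_seq_def by (intro finite_vimageI) (auto simp: inj_on_def)
  ultimately show ?thesis
    unfolding fiber_seq_def by (blast intro: finite_subset)
qed

lemma graded_span_fiber_decomposition:
  assumes m: "ideal m R" and A: "ideal A R" and K: "ideal K R" and I: "ideal I R"
    and AI: "A \<subseteq> I" and KI: "K \<subseteq> I" and G: "finite G"
    and t: "\<And>g. g \<in> G \<Longrightarrow> t g \<in> ideal_pow R I (d g)"
    and hom: "\<And>g. g \<in> G \<Longrightarrow> g = fiber_class R m I (\<lambda>k. if k = d g then t g else \<zero>)"
    and span: "\<And>n. ideal_pow R I n \<subseteq>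
      (ideal_pow R K n <+>\<^bsub>R\<^esub> graded_span R A G d t n) <+>\<^bsub>R\<^esub> fib_den R m I n"
    and z: "z \<in> carrier (special_fiber R m I)"
  shows "\<exists>y\<in>carrier (special_fiber R m K). \<exists>c\<in>G \<rightarrow> carrier (special_fiber R m A).
    z = fib_map R m K I y \<oplus>\<^bsub>special_fiber R m I\<^esub>
      (\<Oplus>\<^bsub>special_fiber R m I\<^esub>g\<in>G. fib_map R m A I (c g) \<otimes>\<^bsub>special_fiber R m I\<^esub> g)"
proof -
  let ?F = "special_fiber R m I"
  let ?single = "\<lambda>g k. if k = d g then t g else \<zero>"
  have tc: "t \<in> G \<rightarrow> carrier R"
    using t ideal.Icarr[OF ideal_pow_ideal[OF I]] by blast
  obtain az where az: "fiber_seq R m I az" "z = fiber_class R m I az"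
    using special_fiber_elemE[OF m I z] by blast
  obtain k \<alpha> where k: "\<And>n. k n \<in> ideal_pow R K n"
    and \<alpha>: "\<And>n. \<alpha> n \<in> Pi G (\<lambda>g. if d g \<le> n then ideal_pow R A (n - d g) else {\<zero>})"
    and rep: "\<And>n. fib_den R m I n +> az n = fib_den R m I n +> (k n \<oplus> (\<Oplus>g\<in>G. \<alpha> n g \<otimes> t g))"
    and small: "\<And>n. az n \<in> fib_den R m I n \<Longrightarrow> k n = \<zero> \<and> (\<forall>g\<in>G. \<alpha> n g = \<zero>)"
    using graded_span_decomposition[OF m A K I G tc span az(1)] by blast
  have \<alpha>c: "\<alpha> n g \<in> carrier R" if "g \<in> G" for n g
    using \<alpha>[of n] that ideal.Icarr[OF ideal_pow_ideal[OF A]] by (auto simp: Pi_iff split: if_splits)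
  have "{n. k n \<notin> fib_den R m K n} \<subseteq> {n. az n \<notin> fib_den R m I n}"
    using small additive_subgroup.zero_closed[OF ideal.axioms(1)[OF fib_den_ideal[OF m K]]] by force
  then have kseq: "fiber_seq R m K k"
    using k az(1) unfolding fiber_seq_def by (blast intro: finite_subset)
  have cseq: "fiber_seq R m A (\<lambda>i. \<alpha> (i + d g) g)" if "g \<in> G" for g
    using graded_coefficient_fiber_seq[OF m A az(1) that \<alpha>] small that by blast
  have "(\<Oplus>i\<in>{..n}. \<alpha> (i + d g) g \<otimes> ?single g (n - i)) = \<alpha> n g \<otimes> t g" if g: "g \<in> G" for g n
    using \<alpha>[of n] g by (intro finsum_conv_single \<alpha>c funcset_mem[OF tc]) (auto simp: Pi_iff)
  then have "(\<Oplus>g\<in>G. \<Oplus>i\<in>{..n}. \<alpha> (i + d g) g \<otimes> ?single g (n - i)) = (\<Oplus>g\<in>G. \<alpha> n g \<otimes> t g)" for n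
    using \<alpha>c tc by (intro finsum_cong') auto
  then have "fib_map R m K I (fiber_class R m K k) \<oplus>\<^bsub>?F\<^esub>
      (\<Oplus>\<^bsub>?F\<^esub>g\<in>G. fib_map R m A I (fiber_class R m A (\<lambda>i. \<alpha> (i + d g) g)) \<otimes>\<^bsub>?F\<^esub> g) =
    fiber_class R m I (\<lambda>n. k n \<oplus> (\<Oplus>g\<in>G. \<alpha> n g \<otimes> t g))"
    using fiber_combination_class[OF m A K I AI KI G kseq refl,
        where ac = "\<lambda>g i. \<alpha> (i + d g) g" and c = "\<lambda>g. fiber_class R m A (\<lambda>i. \<alpha> (i + d g) g)"
        and ag = ?single] cseq fiber_seq_single[OF m I t] hom
    by simp
  also have "\<dots> = z"
    using rep az(2) unfolding fiber_class_def by auto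
  finally show ?thesis
    using fiber_class_closed[OF m K kseq] fiber_class_closed[OF m A cseq]
    by (intro bexI[of _ "fiber_class R m K k"] bexI[of _ "\<lambda>g. fiber_class R m A (\<lambda>i. \<alpha> (i + d g) g)"]) auto
qed

lemma coker_finite_overI:
  assumes m: "ideal m R" and A: "ideal A R" and K: "ideal K R" and I: "ideal I R"
    and AI: "A \<subseteq> I" and KI: "K \<subseteq> I" and G: "finite G"
    and t: "\<And>g. g \<in> G \<Longrightarrow> t g \<in> ideal_pow R I (d g)"
    and hom: "\<And>g. g \<in> G \<Longrightarrow> g = fiber_class R m I (\<lambda>k. if k = d g then t g else \<zero>)"
    and span: "\<And>n. ideal_pow R I n \<subseteq>
      (ideal_pow R K n <+>\<^bsub>R\<^esub> graded_span R A G d t n) <+>\<^bsub>R\<^esub> fib_den R m I n"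
  shows "coker_finite_over R m A K I"
proof -
  have "G \<subseteq> carrier (special_fiber R m I)"
    using fiber_class_closed[OF m I fiber_seq_single[OF m I t]] hom by auto
  then show ?thesis
    unfolding coker_finite_over_def Let_def
    using graded_span_fiber_decomposition[OF m A K I AI KI G t hom span] G by blast
qed

lemma homogeneous_mem_graded_span:
  assumes m: "ideal m R" and A: "ideal A R" and K: "ideal K R" and I: "ideal I R"
    and G: "finite G" "t \<in> G \<rightarrow> carrier R" "g \<in> G" and x: "x \<in> carrier R"
    and eq: "fiber_class R m I (\<lambda>k. if k = n then x else \<zero>) = fiber_class R m I (\<lambda>k. if k = d g then t g else \<zero>)"
  shows "x \<in> (ideal_pow R K n <+>\<^bsub>R\<^esub> graded_span R A G d t n) <+>\<^bsub>R\<^esub> fib_den R m I n"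
    (is "_ \<in> ?T")
proof -
  have KS: "ideal (ideal_pow R K n <+>\<^bsub>R\<^esub> graded_span R A G d t n) R"
    using add_ideals[OF ideal_pow_ideal[OF K] graded_span_ideal[OF A G(1,2)]] .
  have T: "ideal ?T R"
    using add_ideals[OF KS fib_den_ideal[OF m I]] .
  have DT: "fib_den R m I n \<subseteq> ?T"
    using ideal_subset_set_add(2)[OF KS fib_den_ideal[OF m I]] .
  have coset: "fib_den R m I n +> x = fib_den R m I n +> (if n = d g then t g else \<zero>)"
    using fun_cong[OF eq, of n] unfolding fiber_class_def by simp
  show ?thesis
  proof (cases "n = d g")
    case True
    then have "t g \<in> ?T"
      using graded_span_generator[OF A G] ideal_subset_set_add[OF ideal_pow_ideal[OF K] graded_span_ideal[OF A G(1,2)]]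
        ideal_subset_set_add(1)[OF KS fib_den_ideal[OF m I]] by blast
    then show ?thesis
      using rcos_eq_mem[OF fib_den_ideal[OF m I] T DT x funcset_mem[OF G(2,3)]] coset True by simp
  next
    case False
    have "fib_den R m I n +> \<zero> = fib_den R m I n"
      using rcos_eq_self_iff[OF fib_den_ideal[OF m I] zero_closed]
        additive_subgroup.zero_closed[OF ideal.axioms(1)[OF fib_den_ideal[OF m I]]] by blast
    then have "x \<in> fib_den R m I n"
      using coset False rcos_eq_self_iff[OF fib_den_ideal[OF m I] x] by simp
    then show ?thesis
      using DT by blast
  qed
qed

lemma noetherian_homogeneous_generators:
  assumes noeth: "noetherian_ring R" and I: "ideal I R"
  obtains G d t where "finite G"
    and "\<And>g. g \<in> G \<Longrightarrow> d g \<le> N \<and> t g \<in> ideal_pow R I (d g) \<and>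
      g = fiber_class R m I (\<lambda>k. if k = d g then t g else \<zero>)"
    and "\<And>n. n \<le> N \<Longrightarrow> \<exists>S\<subseteq>carrier R. ideal_pow R I n = Idl S \<and>
      (\<forall>x\<in>S. fiber_class R m I (\<lambda>k. if k = n then x else \<zero>) \<in> G)"
proof -
  have "\<forall>n. \<exists>S. S \<subseteq> carrier R \<and> finite S \<and> ideal_pow R I n = Idl S"
    using noetherian_ring.finetely_gen[OF noeth ideal_pow_ideal[OF I]] by blast
  then obtain S where S: "\<forall>n. S n \<subseteq> carrier R \<and> finite (S n) \<and> ideal_pow R I n = Idl (S n)"
    by (rule choice[THEN exE])
  have S_sub: "x \<in> ideal_pow R I n" if "x \<in> S n" for x n
    using S genideal_self that by blast
  define hom where "hom = (\<lambda>(n, x). fiber_class R m I (\<lambda>k. if k = n then x else \<zero>))"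
  define G where "G = hom ` Sigma {..N} S"
  define p where "p g = (SOME q. q \<in> Sigma {..N} S \<and> g = hom q)" for g
  have p: "p g \<in> Sigma {..N} S \<and> g = hom (p g)" if "g \<in> G" for g
    unfolding p_def by (rule someI_ex) (use that G_def in blast)
  show thesis
  proof (rule that)
    show "finite G"
      unfolding G_def using S by auto
    show "fst (p g) \<le> N \<and> snd (p g) \<in> ideal_pow R I (fst (p g)) \<and>
        g = fiber_class R m I (\<lambda>k. if k = fst (p g) then snd (p g) else \<zero>)" if "g \<in> G" for g
      using p[OF that] unfolding hom_def by (auto simp: split_beta intro: S_sub)
    show "\<exists>S'\<subseteq>carrier R. ideal_pow R I n = Idl S' \<and>
        (\<forall>x\<in>S'. fiber_class R m I (\<lambda>k. if k = n then x else \<zero>) \<in> G)" if "n \<le> N" for n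
    proof (intro exI conjI ballI)
      fix x assume "x \<in> S n"
      then have "hom (n, x) \<in> G"
        unfolding G_def using that by (intro imageI) simp
      then show "fiber_class R m I (\<lambda>k. if k = n then x else \<zero>) \<in> G"
        by (simp add: hom_def)
    qed (use S in auto)
  qed
qed

lemma reduction_imp_coker_finite_over:
  assumes noeth: "noetherian_ring R" and m: "ideal m R"
    and A: "ideal A R" and J: "ideal J R" and K: "ideal K R" and I: "ideal I R"
    and AK: "A \<subseteq> K" and JK: "J \<subseteq> K" and KI: "K \<subseteq> I"
    and reduction: "\<And>n. N \<le> n \<Longrightarrow> ideal_pow R I (Suc n) = A \<cdot> ideal_pow R I n <+>\<^bsub>R\<^esub> ideal_pow R J (Suc n)"
  shows "coker_finite_over R m A K I"
proof -
  obtain G d t where G: "finite G"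
    and gen: "\<And>g. g \<in> G \<Longrightarrow> d g \<le> N \<and> t g \<in> ideal_pow R I (d g) \<and>
      g = fiber_class R m I (\<lambda>k. if k = d g then t g else \<zero>)"
    and S: "\<And>n. n \<le> N \<Longrightarrow> \<exists>S\<subseteq>carrier R. ideal_pow R I n = Idl S \<and>
      (\<forall>x\<in>S. fiber_class R m I (\<lambda>k. if k = n then x else \<zero>) \<in> G)"
    using noetherian_homogeneous_generators[OF noeth I] by metis
  have AI: "A \<subseteq> I"
    using AK KI by blast
  have tc: "t \<in> G \<rightarrow> carrier R"
    using gen ideal.Icarr[OF ideal_pow_ideal[OF I]] by blast
  let ?T = "\<lambda>n. (ideal_pow R K n <+>\<^bsub>R\<^esub> graded_span R A G d t n) <+>\<^bsub>R\<^esub> fib_den R m I n"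
  have base: "ideal_pow R I n \<subseteq> ?T n" if n: "n \<le> N" for n
  proof -
    obtain S where S_carr: "S \<subseteq> carrier R" and S_gen: "ideal_pow R I n = Idl S"
      and SG: "\<And>x. x \<in> S \<Longrightarrow> fiber_class R m I (\<lambda>k. if k = n then x else \<zero>) \<in> G"
      using S[OF n] by blast
    have "x \<in> ?T n" if "x \<in> S" for x
      using homogeneous_mem_graded_span[OF m A K I G tc SG[OF that]] gen[OF SG[OF that]] S_carr that
      by auto
    then have "Idl S \<subseteq> ?T n"
      by (intro genideal_minimal add_ideals ideal_pow_ideal graded_span_ideal fib_den_ideal A G tc m I K) auto
    then show ?thesis
      using S_gen by simp
  qed
  have "ideal_pow R I n \<subseteq> ?T n" for n
    using ideal_pow_subset_graded_span[where d = d, OF m A J K I AK JK AI G tc _ base reduction] gen by blast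
  then show ?thesis
    using coker_finite_overI[OF m A K I AI KI G] gen by blast
qed

lemma reduction_iff_coker_finite_over:
  assumes noeth: "noetherian_ring R" and loc: "local_ring R m"
    and A: "ideal A R" and J: "ideal J R" and K: "ideal K R" and I: "ideal I R"
    and AK: "A \<subseteq> K" and JK: "J \<subseteq> K" and KI: "K \<subseteq> I" and KAJ: "K \<subseteq> A <+>\<^bsub>R\<^esub> J"
  shows "(\<exists>N. \<forall>n\<ge>N. ideal_pow R I n = A \<cdot> ideal_pow R I (n - 1) <+>\<^bsub>R\<^esub> ideal_pow R J n)
    \<longleftrightarrow> coker_finite_over R m A K I"
proof
  assume "\<exists>N. \<forall>n\<ge>N. ideal_pow R I n = A \<cdot> ideal_pow R I (n - 1) <+>\<^bsub>R\<^esub> ideal_pow R J n"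
  then obtain N where "\<forall>n\<ge>N. ideal_pow R I n = A \<cdot> ideal_pow R I (n - 1) <+>\<^bsub>R\<^esub> ideal_pow R J n"
    by blast
  then have "ideal_pow R I (Suc n) = A \<cdot> ideal_pow R I n <+>\<^bsub>R\<^esub> ideal_pow R J (Suc n)" if "N \<le> n" for n
    using that by fastforce
  then show "coker_finite_over R m A K I"
    using reduction_imp_coker_finite_over[OF noeth local_ring_ideal[OF loc] A J K I AK JK KI] by blast
next
  assume "coker_finite_over R m A K I"
  then show "\<exists>N. \<forall>n\<ge>N. ideal_pow R I n = A \<cdot> ideal_pow R I (n - 1) <+>\<^bsub>R\<^esub> ideal_pow R J n"
    using coker_finite_over_imp_reduction[OF noeth loc A J K I] AK JK KI KAJ by blast
qed

lemma genideal_reduction_iff_coker_finite_over: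
  assumes noeth: "noetherian_ring R" and loc: "local_ring R m" and I: "ideal I R"
    and SI: "S \<subseteq> I" and TI: "T \<subseteq> I"
  shows "(\<exists>N. \<forall>n\<ge>N. ideal_pow R I n = Idl (S \<cdot> ideal_pow R I (n - 1)) <+>\<^bsub>R\<^esub> ideal_pow R (Idl T) n)
    \<longleftrightarrow> coker_finite_over R m (Idl S) (Idl (S \<union> T)) I"
proof -
  have S: "S \<subseteq> carrier R" and T: "T \<subseteq> carrier R"
    using SI TI ideal.Icarr[OF I] by blast+
  then have ideals: "ideal (Idl S) R" "ideal (Idl T) R" "ideal (Idl (S \<union> T)) R"
    by (auto intro: genideal_ideal)
  have "Idl S \<subseteq> Idl (S \<union> T)" "Idl T \<subseteq> Idl (S \<union> T)"
    using subset_Idl_subset[of "S \<union> T"] S T by auto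
  moreover have "Idl (S \<union> T) \<subseteq> I"
    using genideal_minimal[OF I] SI TI by blast
  moreover have "Idl (S \<union> T) \<subseteq> Idl S <+>\<^bsub>R\<^esub> Idl T"
    using genideal_Un[OF S T] by simp
  moreover have "Idl (S \<cdot> ideal_pow R I (n - 1)) = (Idl S) \<cdot> ideal_pow R I (n - 1)" for n
    using genideal_ideal_prod[OF S ideal_pow_ideal[OF I]] .
  ultimately show ?thesis
    using reduction_iff_coker_finite_over[OF noeth loc ideals I] by simp
qed

end

theorem corollary2p6:
  fixes R :: "('a, 'b) ring_scheme" and m I :: "'a set" and f :: "nat \<Rightarrow> 'a" and l s :: nat
  assumes "noetherian_ring R" and "local_ring R m"
    and "ideal I R"
    and "analytic_spread R m I = enat l" and "1 \<le> l"
    and "f ` {1..l+s} \<subseteq> I"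
  shows "(\<exists>N. \<forall>n\<ge>N. ideal_pow R I n =
            (Idl\<^bsub>R\<^esub> (f ` {1..l-1}) \<cdot>\<^bsub>R\<^esub> ideal_pow R I (n - 1))
              <+>\<^bsub>R\<^esub> ideal_pow R (Idl\<^bsub>R\<^esub> (f ` {l..l+s})) n)
         \<longleftrightarrow> coker_finite_over R m (Idl\<^bsub>R\<^esub> (f ` {1..l-1})) (Idl\<^bsub>R\<^esub> (f ` {1..l+s})) I"
proof -
  interpret cring R
    using assms(2) by (simp add: local_ring_def)
  have split: "f ` {1..l+s} = f ` {1..l-1} \<union> f ` {l..l+s}"
    using assms(5) by (auto simp: image_Un[symmetric] intro!: arg_cong[where f="image f"])
  have "f ` {1..l-1} \<subseteq> I" "f ` {l..l+s} \<subseteq> I"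
    using assms(6) unfolding split by blast+
  then show ?thesis
    unfolding split by (rule genideal_reduction_iff_coker_finite_over[OF assms(1-3)])
qed

end
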